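(* Let $(u_\beta)_{\beta<\alpha}$ be a non-increasing (for $\le_{lex}$) sequence of prime words. If $\alpha\ge2$, then the product $\prod_{\beta<\alpha}u_\beta$ is not prime.
   Context: $A$ is a finite alphabet with a linear order $<_A$. Words are sequences of letters indexed by countable ordinals; $\prod$ is ordered concatenation and $x^\alpha$ the concatenation of $\alpha$ copies of $x$. A suffix of $x$ is $x[\gamma,|x|)$, proper if $0<\gamma<|x|$. Write $x<_{str}x'$ if there are letters $a<_Ab$ and words $y,z,z'$ with $x=yaz$, $x'=ybz'$; $x\le_{lex}x'$ iff $x$ is a prefix of $x'$ or $x<_{str}x'$. A word is primitive if $x=y^\alpha$ implies $\alpha=1$ and $y=x$; $w$ is prime if it is primitive and every proper suffix $z$ satisfies $w\le_{lex}z$. A sequence is non-increasing if $\beta<\beta'$ implies $u_\beta\ge_{lex}u_{\beta'}$. *)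

theory Defs
  imports Main "HOL-Library.Nat_Bijection"
begin

text \<open>A word is a pair (r, f): r is a well-order (in the sense of Well_order, i.e. a
reflexive linear well-order on Field r) on a set of positions in nat (so the length,
the order type of r, is a countable ordinal), and f labels positions with letters.
Words are identified up to label-preserving order isomorphism (word_iso).\<close>

type_synonym 'a word = "nat rel \<times> (nat \<Rightarrow> 'a)"

definition wword :: "'a word \<Rightarrow> bool" where
  "wword w \<longleftrightarrow> Well_order (fst w)"

definition word_iso :: "'a word \<Rightarrow> 'a word \<Rightarrow> bool" (infix "\<simeq>w" 50) where
  "x \<simeq>w y \<longleftrightarrow> (\<exists>h. bij_betw h (Field (fst x)) (Field (fst y))
      \<and> (\<forall>p\<in>Field (fst x). \<forall>q\<in>Field (fst x). (p, q) \<in> fst x \<longleftrightarrow> (h p, h q) \<in> fst y)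
      \<and> (\<forall>p\<in>Field (fst x). snd y (h p) = snd x p))"

definition letter :: "'a \<Rightarrow> 'a word" where
  "letter a = ({(0, 0)}, \<lambda>_. a)"

definition wconc :: "'a word \<Rightarrow> 'a word \<Rightarrow> 'a word" (infixr "\<cdot>w" 65) where
  "x \<cdot>w y = (
     {(2*p, 2*p') | p p'. (p, p') \<in> fst x}
   \<union> {(2*q+1, 2*q'+1) | q q'. (q, q') \<in> fst y}
   \<union> {(2*p, 2*q+1) | p q. p \<in> Field (fst x) \<and> q \<in> Field (fst y)},
     \<lambda>n. if even n then snd x (n div 2) else snd y (n div 2))"

text \<open>Ordered product of a sequence (u i) indexed by a well-order I on nat
(a countable ordinal): positions are prod_encode (i, p), ordered lexicographically.\<close>
definition wprod :: "nat rel \<Rightarrow> (nat \<Rightarrow> 'a word) \<Rightarrow> 'a word" where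
  "wprod I u = (
     {(prod_encode (i, p), prod_encode (j, q)) | i j p q.
        i \<in> Field I \<and> j \<in> Field I \<and> p \<in> Field (fst (u i)) \<and> q \<in> Field (fst (u j)) \<and>
        ((i \<noteq> j \<and> (i, j) \<in> I) \<or> (i = j \<and> (p, q) \<in> fst (u i)))},
     \<lambda>n. snd (u (fst (prod_decode n))) (snd (prod_decode n)))"

definition wpow :: "'a word \<Rightarrow> nat rel \<Rightarrow> 'a word" where
  "wpow x I = wprod I (\<lambda>_. x)"

definition str_less :: "('a::linorder) word \<Rightarrow> 'a word \<Rightarrow> bool" where
  "str_less x x' \<longleftrightarrow> (\<exists>y a b z z'. wword y \<and> wword z \<and> wword z' \<and> a < b \<and>
      x \<simeq>w (y \<cdot>w letter a \<cdot>w z) \<and> x' \<simeq>w (y \<cdot>w letter b \<cdot>w z'))"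

definition wprefix :: "'a word \<Rightarrow> 'a word \<Rightarrow> bool" where
  "wprefix x x' \<longleftrightarrow> (\<exists>z. wword z \<and> x' \<simeq>w (x \<cdot>w z))"

definition lex_le :: "('a::linorder) word \<Rightarrow> 'a word \<Rightarrow> bool" where
  "lex_le x x' \<longleftrightarrow> wprefix x x' \<or> str_less x x'"

definition primitive :: "'a word \<Rightarrow> bool" where
  "primitive x \<longleftrightarrow> wword x \<and> (\<forall>y I. wword y \<and> Well_order I \<and> x \<simeq>w wpow y I \<longrightarrow>
      card (Field I) = 1 \<and> y \<simeq>w x)"

text \<open>Proper suffixes z of w are exactly those with w = y z, y and z nonempty
(z = w[gamma,|w|) with 0 < gamma < |w|).\<close>
definition prime_word :: "('a::linorder) word \<Rightarrow> bool" where
  "prime_word w \<longleftrightarrow> primitive w \<and>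
     (\<forall>y z. wword y \<and> wword z \<and> Field (fst y) \<noteq> {} \<and> Field (fst z) \<noteq> {} \<and>
        w \<simeq>w (y \<cdot>w z) \<longrightarrow> lex_le w z)"

end

theory Submission
  imports Defs
begin

text \<open>
  Let \<open>w\<close> be the product of the non-increasing prime words \<open>u\<^sub>i\<close> and \<open>u\<^sub>z\<close> its first factor.
  For each \<open>i\<close>, the suffix \<open>s\<^sub>i\<close> of \<open>w\<close> starting at block \<open>i\<close> satisfies
  \<open>u\<^sub>z \<le> w \<le> s\<^sub>i\<close>, and \<open>u\<^sub>i \<le> u\<^sub>z\<close> is a prefix of \<open>s\<^sub>i\<close>; a strict difference
  between \<open>u\<^sub>i\<close> and \<open>u\<^sub>z\<close> would carry over to \<open>s\<^sub>i < u\<^sub>z\<close>, so every factor is a prefix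
  of \<open>u\<^sub>z\<close>. Prefixes of one word that decrease along a well-order are eventually constant, say
  \<open>u\<^sub>j \<simeq> v\<close> from \<open>i\<^sub>0\<close> on. If \<open>v \<simeq> u\<^sub>z\<close>, all factors are isomorphic to \<open>u\<^sub>z\<close>
  and \<open>w\<close> is a power of \<open>u\<^sub>z\<close>, against primitivity of \<open>w\<close>. Otherwise \<open>u\<^sub>z\<close> lies below
  the tail product \<open>v\<^sup>T\<close> but not below its factor \<open>v\<close>. As \<open>u\<^sub>z\<close> lies below each of its
  suffixes, it cannot end inside a block of \<open>v\<^sup>T\<close> (the suffix starting at that block would lie
  below \<open>v\<close>), so \<open>u\<^sub>z\<close> is a power of \<open>v\<close>, and primitivity of \<open>u\<^sub>z\<close> gives \<open>v \<simeq> u\<^sub>z\<close>.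
\<close>

lemma wo_refl: "Well_order r \<Longrightarrow> a \<in> Field r \<Longrightarrow> (a,a) \<in> r"
  by (simp add: well_order_on_def linear_order_on_def partial_order_on_def preorder_on_def
      refl_on_def)

lemma wo_trans: "Well_order r \<Longrightarrow> (a,b) \<in> r \<Longrightarrow> (b,c) \<in> r \<Longrightarrow> (a,c) \<in> r"
  unfolding well_order_on_def linear_order_on_def partial_order_on_def preorder_on_def
  by (meson transD)

lemma wo_antisym: "Well_order r \<Longrightarrow> (a,b) \<in> r \<Longrightarrow> (b,a) \<in> r \<Longrightarrow> a = b"
  unfolding well_order_on_def linear_order_on_def partial_order_on_def preorder_on_def
  by (meson antisymD)

lemma wo_total: "Well_order r \<Longrightarrow> a \<in> Field r \<Longrightarrow> b \<in> Field r \<Longrightarrow> (a,b) \<in> r \<or> (b,a) \<in> r"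
  unfolding well_order_on_def linear_order_on_def total_on_def
  by (metis refl_on_def partial_order_on_def preorder_on_def)

lemma wo_wf: "Well_order r \<Longrightarrow> wf (r - Id)"
  unfolding well_order_on_def by simp

section \<open>Subwords, initial segments and isomorphisms\<close>

definition subword :: "'a word \<Rightarrow> nat set \<Rightarrow> 'a word" where
  "subword x A = (Restr (fst x) A, snd x)"

definition below :: "'a word \<Rightarrow> nat \<Rightarrow> nat set" where
  "below x a = {b. (b,a) \<in> fst x \<and> b \<noteq> a}"

definition initial :: "'a word \<Rightarrow> nat set \<Rightarrow> bool" where
  "initial x A \<longleftrightarrow> A \<subseteq> Field (fst x) \<and> (\<forall>a\<in>A. \<forall>b. (b,a) \<in> fst x \<longrightarrow> b \<in> A)"

definition word_isom :: "(nat \<Rightarrow> nat) \<Rightarrow> 'a word \<Rightarrow> 'a word \<Rightarrow> bool" where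
  "word_isom h x y \<longleftrightarrow> bij_betw h (Field (fst x)) (Field (fst y))
      \<and> (\<forall>p\<in>Field (fst x). \<forall>q\<in>Field (fst x). (p, q) \<in> fst x \<longleftrightarrow> (h p, h q) \<in> fst y)
      \<and> (\<forall>p\<in>Field (fst x). snd y (h p) = snd x p)"

lemma word_iso_iff: "x \<simeq>w y \<longleftrightarrow> (\<exists>h. word_isom h x y)"
  by (simp add: word_iso_def word_isom_def)

lemma word_isom_id: "word_isom id x x"
  by (simp add: word_isom_def)

lemma word_isom_inv:
  assumes "word_isom h x y" shows "word_isom (inv_into (Field (fst x)) h) y x"
proof -
  let ?g = "inv_into (Field (fst x)) h"
  have b: "bij_betw h (Field (fst x)) (Field (fst y))" using assms by (simp add: word_isom_def)
  have b2: "bij_betw ?g (Field (fst y)) (Field (fst x))" using b by (rule bij_betw_inv_into)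
  have fx: "\<And>q. q \<in> Field (fst y) \<Longrightarrow> h (?g q) = q" using b
    by (meson bij_betw_inv_into_right)
  have gx: "\<And>q. q \<in> Field (fst y) \<Longrightarrow> ?g q \<in> Field (fst x)" using b2
    by (meson bij_betwE)
  show ?thesis unfolding word_isom_def
  proof (intro conjI ballI)
    show "bij_betw ?g (Field (fst y)) (Field (fst x))" by (fact b2)
  next
    fix p q assume "p \<in> Field (fst y)" "q \<in> Field (fst y)"
    then show "(p, q) \<in> fst y \<longleftrightarrow> (?g p, ?g q) \<in> fst x"
      using assms unfolding word_isom_def using fx gx by metis
  next
    fix p assume "p \<in> Field (fst y)"
    then show "snd x (?g p) = snd y p"
      using assms unfolding word_isom_def using fx gx by metis
  qed
qed

lemma word_isom_comp:
  assumes "word_isom f x y" "word_isom g y z" shows "word_isom (g \<circ> f) x z"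
proof -
  have bf: "bij_betw f (Field (fst x)) (Field (fst y))" using assms by (simp add: word_isom_def)
  have bg: "bij_betw g (Field (fst y)) (Field (fst z))" using assms by (simp add: word_isom_def)
  have fin: "\<And>p. p \<in> Field (fst x) \<Longrightarrow> f p \<in> Field (fst y)"
    using bf by (meson bij_betwE)
  show ?thesis unfolding word_isom_def
  proof (intro conjI ballI)
    show "bij_betw (g \<circ> f) (Field (fst x)) (Field (fst z))"
      using bf bg by (rule bij_betw_trans)
  next
    fix p q assume "p \<in> Field (fst x)" "q \<in> Field (fst x)"
    then show "(p, q) \<in> fst x \<longleftrightarrow> ((g \<circ> f) p, (g \<circ> f) q) \<in> fst z"
      using assms fin unfolding word_isom_def by simp
  next
    fix p assume "p \<in> Field (fst x)"
    then show "snd z ((g \<circ> f) p) = snd x p"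
      using assms fin unfolding word_isom_def by simp
  qed
qed

lemma word_iso_refl: "x \<simeq>w x" using word_isom_id word_iso_iff by blast

lemma word_iso_sym: "x \<simeq>w y \<Longrightarrow> y \<simeq>w x"
  using word_isom_inv word_iso_iff by blast

lemma word_iso_trans: "x \<simeq>w y \<Longrightarrow> y \<simeq>w z \<Longrightarrow> x \<simeq>w z" by (meson word_isom_comp word_iso_iff)

lemma wword_refl: "wword x \<Longrightarrow> a \<in> Field (fst x) \<Longrightarrow> (a,a) \<in> fst x"
  by (simp add: wword_def wo_refl)

lemma Field_subword:
  assumes "wword x" "A \<subseteq> Field (fst x)"
  shows "Field (fst (subword x A)) = A"
proof
  show "Field (fst (subword x A)) \<subseteq> A" unfolding subword_def by (auto simp: Field_def)
  show "A \<subseteq> Field (fst (subword x A))"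
  proof
    fix a assume a: "a \<in> A"
    then have "(a,a) \<in> fst (subword x A)"
      using wword_refl[OF assms(1)] assms(2) by (auto simp: subword_def)
    then show "a \<in> Field (fst (subword x A))" by (auto simp: Field_def)
  qed
qed

lemma Field_subword_subset: "Field (fst (subword x A)) \<subseteq> A"
  unfolding subword_def by (auto simp: Field_def)

lemma wword_subword: "wword x \<Longrightarrow> wword (subword x A)"
  unfolding subword_def wword_def by (simp add: Well_order_Restr)

lemma subword_subword: "subword (subword x A) B = subword x (A \<inter> B)"
  unfolding subword_def by auto

lemma subword_Field: "subword x (Field (fst x)) = x"
  unfolding subword_def by (simp add: Restr_Field)

lemma snd_subword[simp]: "snd (subword x A) = snd x" by (simp add: subword_def)

lemma fst_subword: "fst (subword x A) = Restr (fst x) A" by (simp add: subword_def)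

lemma word_isom_image: "word_isom f x y \<Longrightarrow> f ` Field (fst x) = Field (fst y)"
  unfolding word_isom_def by (simp add: bij_betw_def)

lemma word_isom_in: "word_isom f x y \<Longrightarrow> p \<in> Field (fst x) \<Longrightarrow> f p \<in> Field (fst y)"
  using word_isom_image by blast

lemma word_isom_inj: "word_isom f x y \<Longrightarrow> inj_on f (Field (fst x))"
  unfolding word_isom_def by (simp add: bij_betw_def)

lemma word_isom_rel:
  "word_isom f x y \<Longrightarrow> p \<in> Field (fst x) \<Longrightarrow> q \<in> Field (fst x) \<Longrightarrow>
    (p, q) \<in> fst x \<longleftrightarrow> (f p, f q) \<in> fst y"
  unfolding word_isom_def by blast

lemma word_isom_label: "word_isom f x y \<Longrightarrow> p \<in> Field (fst x) \<Longrightarrow> snd y (f p) = snd x p"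
  unfolding word_isom_def by blast

lemma below_subset_Field: "below x a \<subseteq> Field (fst x)"
  unfolding below_def by (auto simp: Field_def)

lemma word_isom_below:
  assumes "word_isom f x y" "a \<in> Field (fst x)"
  shows "f ` below x a = below y (f a)"
proof
  show "f ` below x a \<subseteq> below y (f a)"
  proof
    fix c assume "c \<in> f ` below x a"
    then obtain b where b: "b \<in> below x a" "c = f b" by blast
    have bF: "b \<in> Field (fst x)" using b below_subset_Field by blast
    have "(f b, f a) \<in> fst y" using b bF assms word_isom_rel unfolding below_def by blast
    moreover have "f b \<noteq> f a"
      using b bF assms word_isom_inj unfolding below_def inj_on_def by blast
    ultimately show "c \<in> below y (f a)" using b unfolding below_def by simp
  qed
next
  show "below y (f a) \<subseteq> f ` below x a"
  proof
    fix c assume c: "c \<in> below y (f a)"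
    then have "c \<in> Field (fst y)" using below_subset_Field by blast
    then obtain b where b: "b \<in> Field (fst x)" "c = f b"
      using word_isom_image[OF assms(1)] by blast
    have "(b, a) \<in> fst x" using c b assms word_isom_rel unfolding below_def by blast
    moreover have "b \<noteq> a" using c b unfolding below_def by auto
    ultimately show "c \<in> f ` below x a" using b unfolding below_def by blast
  qed
qed

lemma word_isom_initial: "word_isom f x y \<Longrightarrow> initial x A \<Longrightarrow> initial y (f ` A)"
  unfolding initial_def
proof (intro conjI ballI allI impI)
  assume a: "word_isom f x y" "A \<subseteq> Field (fst x) \<and> (\<forall>a\<in>A. \<forall>b. (b, a) \<in> fst x \<longrightarrow> b \<in> A)"
  then show "f ` A \<subseteq> Field (fst y)" using word_isom_in by blast
  fix c d assume c: "c \<in> f ` A" "(d, c) \<in> fst y"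
  then obtain a0 where a0: "a0 \<in> A" "c = f a0" by blast
  have "d \<in> Field (fst y)" using c by (auto simp: Field_def)
  then obtain b0 where b0: "b0 \<in> Field (fst x)" "d = f b0"
    using word_isom_image[OF a(1)] by blast
  have "(b0, a0) \<in> fst x" using a a0 b0 c word_isom_rel by blast
  then show "d \<in> f ` A" using a a0 b0 by blast
qed

lemma initial_below: assumes "wword x" shows "initial x (below x a)"
  unfolding initial_def
proof (intro conjI ballI allI impI)
  show "below x a \<subseteq> Field (fst x)" by (rule below_subset_Field)
  fix b c assume b: "b \<in> below x a" and c: "(c, b) \<in> fst x"
  have wo: "Well_order (fst x)" using assms by (simp add: wword_def)
  have ba: "(b,a) \<in> fst x" "b \<noteq> a" using b by (auto simp: below_def)
  have "(c,a) \<in> fst x" using wo_trans[OF wo c ba(1)] .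
  moreover have "c \<noteq> a" using wo_antisym[OF wo] c ba by blast
  ultimately show "c \<in> below x a" by (simp add: below_def)
qed

lemma initial_Field: "initial x (Field (fst x))"
  unfolding initial_def by (auto simp: Field_def)

lemma initial_subset_Field: "initial x A \<Longrightarrow> A \<subseteq> Field (fst x)"
  unfolding initial_def by blast

lemma initial_below_subset: "initial x A \<Longrightarrow> a \<in> A \<Longrightarrow> below x a \<subseteq> A"
  unfolding initial_def below_def by blast

lemma initial_subword_trans: "initial x A \<Longrightarrow> initial (subword x A) B \<Longrightarrow> initial x B"
  unfolding initial_def fst_subword by (auto simp: Field_def) blast+

lemma initial_in_subword:
  assumes "initial x B" "B \<subseteq> A" "wword x" "A \<subseteq> Field (fst x)"
  shows "initial (subword x A) B"
  unfolding initial_def Field_subword[OF assms(3,4)]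
  using assms(1,2) unfolding initial_def fst_subword by blast

lemma initial_chain:
  assumes "wword x" "initial x A" "initial x B"
  shows "A \<subseteq> B \<or> B \<subseteq> A"
proof (rule ccontr)
  assume "\<not> (A \<subseteq> B \<or> B \<subseteq> A)"
  then obtain a b where ab: "a \<in> A" "a \<notin> B" "b \<in> B" "b \<notin> A" by blast
  have "a \<in> Field (fst x)" "b \<in> Field (fst x)" using ab assms unfolding initial_def by auto
  then have "(a,b) \<in> fst x \<or> (b,a) \<in> fst x"
    using wo_total[of "fst x" a b] assms(1) unfolding wword_def by blast
  then show False using ab assms unfolding initial_def by blast
qed

lemma below_subword: "below (subword x A) a = (if a \<in> A then below x a \<inter> A else {})"
  unfolding below_def fst_subword by auto

lemma below_inj:
  assumes "wword x" "a \<in> Field (fst x)" "b \<in> Field (fst x)" "below x a = below x b"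
  shows "a = b"
proof (rule ccontr)
  assume ne: "a \<noteq> b"
  have "(a,b) \<in> fst x \<or> (b,a) \<in> fst x"
    using wo_total[of "fst x" a b] assms unfolding wword_def by blast
  then have "a \<in> below x b \<or> b \<in> below x a" using ne by (auto simp: below_def)
  then show False using assms(4) by (auto simp: below_def)
qed

lemma initial_iso_eq:
  assumes "wword x" "initial x A" "initial x B" "word_isom f (subword x A) (subword x B)"
  shows "A = B"
proof -
  have AF: "A \<subseteq> Field (fst x)" "B \<subseteq> Field (fst x)"
    using assms unfolding initial_def by auto
  have FA: "Field (fst (subword x A)) = A" "Field (fst (subword x B)) = B"
    using Field_subword[OF assms(1) AF(1)] Field_subword[OF assms(1) AF(2)] by auto
  \<comment> \<open>a least point moved by \<open>f\<close> would have the same lower set as its image\<close>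
  have fixes_A: "\<forall>a\<in>A. f a = a"
  proof (rule ccontr)
    assume "\<not> (\<forall>a\<in>A. f a = a)"
    then obtain a0 where a0: "a0 \<in> {a\<in>A. f a \<noteq> a}" by blast
    have wf: "wf (fst x - Id)" using wo_wf assms(1) unfolding wword_def by blast
    obtain a where a: "a \<in> {a\<in>A. f a \<noteq> a}"
      and m: "\<And>y. (y, a) \<in> fst x - Id \<Longrightarrow> y \<notin> {a\<in>A. f a \<noteq> a}"
      by (rule wfE_min[OF wf a0]) blast
    have a: "a \<in> A" "f a \<noteq> a" using a by auto
    have fa: "f a \<in> B" using a FA word_isom_in[OF assms(4)] by auto
    have u1: "below (subword x A) a = below x a"
      using a assms(2) by (auto simp: initial_def below_def fst_subword)
    have u2: "below (subword x B) (f a) = below x (f a)"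
      using fa assms(3) by (auto simp: initial_def below_def fst_subword)
    have "f ` below x a = below x (f a)" using word_isom_below[OF assms(4)] a FA u1 u2 by metis
    moreover have "f ` below x a = below x a"
    proof -
      have "\<forall>b \<in> below x a. f b = b"
      proof
        fix b assume b: "b \<in> below x a"
        then have "b \<in> A" using assms(2) a unfolding initial_def below_def by blast
        then show "f b = b" using m[of b] b unfolding below_def by auto
      qed
      then show ?thesis by force
    qed
    ultimately have "below x a = below x (f a)" by simp
    then have "a = f a" using below_inj assms(1) AF a fa by blast
    then show False using a by simp
  qed
  have "f ` A = B" using word_isom_image[OF assms(4)] FA by simp
  then show ?thesis using fixes_A by force
qed

lemma word_isom_restrict:
  assumes "wword x" "word_isom f x y" "A \<subseteq> Field (fst x)"
  shows "word_isom f (subword x A) (subword y (f ` A))"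
proof -
  have fa: "f ` A \<subseteq> Field (fst y)" using assms word_isom_in by blast
  have F1: "Field (fst (subword x A)) = A" using assms Field_subword by blast
  have F2: "Field (fst (subword y (f ` A))) = f ` A"
  proof
    show "Field (fst (subword y (f ` A))) \<subseteq> f ` A" by (rule Field_subword_subset)
    show "f ` A \<subseteq> Field (fst (subword y (f ` A)))"
    proof
      fix c assume "c \<in> f ` A"
      then obtain a where a: "a \<in> A" "c = f a" by blast
      have "(a,a) \<in> fst x" using a assms wword_refl by blast
      then have "(c,c) \<in> fst y" using a assms word_isom_rel by blast
      then have "(c,c) \<in> fst (subword y (f ` A))" using a by (auto simp: fst_subword)
      then show "c \<in> Field (fst (subword y (f ` A)))" by (auto simp: Field_def)
    qed
  qed
  have inj: "inj_on f A" using word_isom_inj[OF assms(2)] assms(3) inj_on_subset by blast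
  show ?thesis unfolding word_isom_def F1 F2
  proof (intro conjI ballI)
    show "bij_betw f A (f ` A)" using inj by (simp add: bij_betw_def)
  next
    fix p q assume pq: "p \<in> A" "q \<in> A"
    then show "(p, q) \<in> fst (subword x A) \<longleftrightarrow> (f p, f q) \<in> fst (subword y (f ` A))"
      using word_isom_rel[OF assms(2)] assms(3) by (auto simp: fst_subword)
  next
    fix p assume "p \<in> A"
    then show "snd (subword y (f ` A)) (f p) = snd (subword x A) p"
      using word_isom_label[OF assms(2)] assms(3) by auto
  qed
qed

lemma word_isom_initial_below:
  assumes wx: "wword x" and wy: "wword y" and A: "initial x A" and B: "initial y B"
    and f: "word_isom f (subword x A) (subword y B)" and a: "a \<in> A"
  shows "f a \<in> B \<and> word_isom f (subword x (below x a)) (subword y (below y (f a)))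
    \<and> snd y (f a) = snd x a"
proof -
  have AF: "A \<subseteq> Field (fst x)" using A initial_subset_Field by blast
  have BF: "B \<subseteq> Field (fst y)" using B initial_subset_Field by blast
  have FA: "Field (fst (subword x A)) = A" using Field_subword[OF wx AF] .
  have FB: "Field (fst (subword y B)) = B" using Field_subword[OF wy BF] .
  have fa: "f a \<in> B" using word_isom_in[OF f] FA FB a by blast
  have uA: "below x a \<subseteq> A" using initial_below_subset[OF A a] .
  have uB: "below y (f a) \<subseteq> B" using initial_below_subset[OF B fa] .
  have img: "f ` below x a = below y (f a)"
  proof -
    have "f ` below (subword x A) a = below (subword y B) (f a)"
      using word_isom_below[OF f] FA a by blast
    moreover have "below (subword x A) a = below x a"
      using uA a by (simp add: below_subword Int_absorb2)
    moreover have "below (subword y B) (f a) = below y (f a)"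
      using uB fa by (simp add: below_subword Int_absorb2)
    ultimately show ?thesis by simp
  qed
  have "word_isom f (subword (subword x A) (below x a)) (subword (subword y B) (f ` below x a))"
    using word_isom_restrict[OF wword_subword[OF wx] f] FA uA by simp
  then have "word_isom f (subword x (below x a)) (subword y (below y (f a)))"
    using img uA uB by (simp add: subword_subword Int_absorb1)
  moreover have "snd y (f a) = snd x a" using word_isom_label[OF f] FA a by simp
  ultimately show ?thesis using fa by blast
qed

lemma word_isom_initial_image:
  assumes wy: "wword y" and wz: "wword z" and C: "initial z C"
    and g: "word_isom g y (subword z C)" and B: "initial y B"
  shows "initial z (g ` B) \<and> word_isom g (subword y B) (subword z (g ` B))"
proof -
  have CF: "C \<subseteq> Field (fst z)" using C initial_subset_Field by blast
  have FC: "Field (fst (subword z C)) = C" using Field_subword[OF wz CF] .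
  have BF: "B \<subseteq> Field (fst y)" using B initial_subset_Field by blast
  have gB: "g ` B \<subseteq> C" using word_isom_image[OF g] FC BF by blast
  have i1: "initial (subword z C) (g ` B)" using word_isom_initial[OF g B] .
  have i2: "initial z (g ` B)" using initial_subword_trans[OF C i1] .
  have "word_isom g (subword y B) (subword (subword z C) (g ` B))"
    using word_isom_restrict[OF wy g BF] .
  then have "word_isom g (subword y B) (subword z (g ` B))"
    using gB by (simp add: subword_subword Int_absorb1)
  then show ?thesis using i2 by blast
qed

lemma initial_family_least:
  assumes wx: "wword x" and C: "\<forall>i\<in>K. initial x (C i)" and K: "i \<in> K"
  shows "\<exists>i0\<in>K. \<forall>j\<in>K. C i0 \<subseteq> C j"
proof (cases "\<forall>j\<in>K. C j = Field (fst x)")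
  case True
  then show ?thesis using K by auto
next
  case False
  let ?M = "\<Union>j\<in>K. Field (fst x) - C j"
  obtain k where "k \<in> ?M" using False C initial_subset_Field by blast
  then obtain m where m: "m \<in> ?M" and min: "\<And>y. (y, m) \<in> fst x - Id \<Longrightarrow> y \<notin> ?M"
    using wfE_min[OF wo_wf] wx unfolding wword_def by metis
  then obtain i0 where i0: "i0 \<in> K" "m \<in> Field (fst x) - C i0" by blast
  have "C i0 \<subseteq> C j" if j: "j \<in> K" for j
  proof
    fix y assume y: "y \<in> C i0"
    then have yF: "y \<in> Field (fst x)" using C i0 initial_subset_Field by blast
    moreover have "(m, y) \<notin> fst x" using y i0 C unfolding initial_def by blast
    ultimately have "(y, m) \<in> fst x - Id"
      using i0 wo_total wx unfolding wword_def by fastforce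
    then show "y \<in> C j" using min j yF by blast
  qed
  then show ?thesis using i0 by blast
qed

section \<open>Concatenation\<close>

lemma rel_wconc_ee[simp]: "(2 * p, 2 * q) \<in> fst (y \<cdot>w z) \<longleftrightarrow> (p, q) \<in> fst y"
  unfolding wconc_def by auto presburger+

lemma rel_wconc_oo[simp]: "(Suc (2 * p), Suc (2 * q)) \<in> fst (y \<cdot>w z) \<longleftrightarrow> (p, q) \<in> fst z"
  unfolding wconc_def by auto presburger+

lemma rel_wconc_eo[simp]:
  "(2 * p, Suc (2 * q)) \<in> fst (y \<cdot>w z) \<longleftrightarrow> p \<in> Field (fst y) \<and> q \<in> Field (fst z)"
  unfolding wconc_def by auto presburger+

lemma rel_wconc_oe[simp]: "(Suc (2 * p), 2 * q) \<notin> fst (y \<cdot>w z)"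
  unfolding wconc_def by auto presburger+

lemma rel_wconc_even: "(m, n) \<in> fst (y \<cdot>w z) \<Longrightarrow> even n \<Longrightarrow> even m"
  unfolding wconc_def by auto

lemma Field_wconc:
  "Field (fst (y \<cdot>w z)) = (\<lambda>p. 2*p) ` Field (fst y) \<union> (\<lambda>q. 2*q+1) ` Field (fst z)"
proof
  show "Field (fst (y \<cdot>w z)) \<subseteq> (\<lambda>p. 2*p) ` Field (fst y) \<union> (\<lambda>q. 2*q+1) ` Field (fst z)"
    unfolding wconc_def Field_def by auto
  show "(\<lambda>p. 2*p) ` Field (fst y) \<union> (\<lambda>q. 2*q+1) ` Field (fst z) \<subseteq> Field (fst (y \<cdot>w z))"
  proof
    fix n assume "n \<in> (\<lambda>p. 2*p) ` Field (fst y) \<union> (\<lambda>q. 2*q+1) ` Field (fst z)"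
    then show "n \<in> Field (fst (y \<cdot>w z))"
    proof
      assume "n \<in> (\<lambda>p. 2*p) ` Field (fst y)"
      then obtain p where p: "p \<in> Field (fst y)" "n = 2*p" by blast
      then obtain p' where "(p,p') \<in> fst y \<or> (p',p) \<in> fst y" by (auto simp: Field_def)
      then have "(2*p, 2*p') \<in> fst (y \<cdot>w z) \<or> (2*p', 2*p) \<in> fst (y \<cdot>w z)"
        by simp
      then show ?thesis using p by (meson FieldI1 FieldI2)
    next
      assume "n \<in> (\<lambda>q. 2*q+1) ` Field (fst z)"
      then obtain p where p: "p \<in> Field (fst z)" "n = Suc (2*p)" by auto
      then obtain p' where "(p,p') \<in> fst z \<or> (p',p) \<in> fst z" by (auto simp: Field_def)
      then have "(Suc (2*p), Suc (2*p')) \<in> fst (y \<cdot>w z) \<or> (Suc (2*p'), Suc (2*p)) \<in> fst (y \<cdot>w z)"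
        by simp
      then show ?thesis using p by (meson FieldI1 FieldI2)
    qed
  qed
qed

lemma snd_wconc: "snd (y \<cdot>w z) n = (if even n then snd y (n div 2) else snd z (n div 2))"
  unfolding wconc_def by simp

lemma word_isom_wconc_left:
  assumes refl: "\<forall>n\<in>E. (n,n) \<in> fst (y \<cdot>w z)" and E: "E = (\<lambda>p. 2*p) ` Field (fst y)"
  shows "word_isom (\<lambda>n. n div 2) (subword (y \<cdot>w z) E) y"
proof -
  have FE: "Field (fst (subword (y \<cdot>w z) E)) = E"
  proof
    show "Field (fst (subword (y \<cdot>w z) E)) \<subseteq> E" by (rule Field_subword_subset)
    show "E \<subseteq> Field (fst (subword (y \<cdot>w z) E))"
      using refl by (auto simp: fst_subword Field_def)
  qed
  show ?thesis unfolding word_isom_def FE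
  proof (intro conjI ballI)
    show "bij_betw (\<lambda>n. n div 2) E (Field (fst y))" unfolding E bij_betw_def inj_on_def
      by (auto simp: image_image)
  next
    fix p q assume "p \<in> E" "q \<in> E"
    then show "(p, q) \<in> fst (subword (y \<cdot>w z) E) \<longleftrightarrow> (p div 2, q div 2) \<in> fst y"
      unfolding E fst_subword by auto
  next
    fix p assume "p \<in> E"
    then show "snd y (p div 2) = snd (subword (y \<cdot>w z) E) p" unfolding E
      by (auto simp: snd_wconc)
  qed
qed

lemma word_isom_wconc_right:
  assumes refl: "\<forall>n\<in>E. (n,n) \<in> fst (y \<cdot>w z)" and E: "E = (\<lambda>p. 2*p+1) ` Field (fst z)"
  shows "word_isom (\<lambda>n. n div 2) (subword (y \<cdot>w z) E) z"
proof -
  have FE: "Field (fst (subword (y \<cdot>w z) E)) = E"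
  proof
    show "Field (fst (subword (y \<cdot>w z) E)) \<subseteq> E" by (rule Field_subword_subset)
    show "E \<subseteq> Field (fst (subword (y \<cdot>w z) E))"
      using refl by (auto simp: fst_subword Field_def)
  qed
  show ?thesis unfolding word_isom_def FE
  proof (intro conjI ballI)
    show "bij_betw (\<lambda>n. n div 2) E (Field (fst z))" unfolding E bij_betw_def inj_on_def
      by (auto simp: image_image)
  next
    fix p q assume "p \<in> E" "q \<in> E"
    then show "(p, q) \<in> fst (subword (y \<cdot>w z) E) \<longleftrightarrow> (p div 2, q div 2) \<in> fst z"
      unfolding E fst_subword by auto
  next
    fix p assume "p \<in> E"
    then show "snd z (p div 2) = snd (subword (y \<cdot>w z) E) p" unfolding E
      by (auto simp: snd_wconc)
  qed
qed

lemma wconc_split: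
  assumes wx: "wword x" and h: "word_isom h x (y \<cdot>w z)"
  shows "\<exists>A. initial x A \<and> subword x A \<simeq>w y \<and> subword x (Field (fst x) - A) \<simeq>w z"
proof -
  let ?c = "y \<cdot>w z" and ?Fx = "Field (fst x)"
  define A where "A = {a \<in> ?Fx. even (h a)}"
  define E where "E = (\<lambda>p. 2*p) ` Field (fst y)"
  define Od where "Od = (\<lambda>p. 2*p+1) ` Field (fst z)"
  have Fc: "Field (fst ?c) = E \<union> Od" unfolding E_def Od_def by (rule Field_wconc)
  have hF: "h ` ?Fx = E \<union> Od" using word_isom_image[OF h] Fc by simp
  have reflc: "\<forall>n\<in>Field (fst ?c). (n,n) \<in> fst ?c"
  proof
    fix n assume "n \<in> Field (fst ?c)"
    then obtain a where "a \<in> ?Fx" "n = h a" using word_isom_image[OF h] by blast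
    then show "(n,n) \<in> fst ?c" using wword_refl[OF wx] word_isom_rel[OF h] by blast
  qed
  have "h ` A = h ` ?Fx \<inter> Collect even" "h ` (?Fx - A) = h ` ?Fx \<inter> Collect odd"
    unfolding A_def by auto
  moreover have "E \<subseteq> Collect even" "Od \<subseteq> Collect odd" unfolding E_def Od_def
    by auto
  ultimately have hA: "h ` A = E" and hB: "h ` (?Fx - A) = Od" using hF by auto
  have AF: "A \<subseteq> ?Fx" unfolding A_def by blast
  have "initial x A"
    unfolding initial_def
  proof (intro conjI ballI allI impI)
    show "A \<subseteq> ?Fx" by (fact AF)
    fix a b assume a: "a \<in> A" and ba: "(b,a) \<in> fst x"
    have bF: "b \<in> ?Fx" using ba by (rule FieldI1)
    have "(h b, h a) \<in> fst ?c" using ba bF a AF word_isom_rel[OF h] by blast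
    then have "even (h b)" using a rel_wconc_even unfolding A_def by blast
    then show "b \<in> A" using bF unfolding A_def by blast
  qed
  moreover have "word_isom (\<lambda>n. n div 2) (subword ?c E) y"
    by (rule word_isom_wconc_left) (use reflc Fc E_def in auto)
  then have "word_isom ((\<lambda>n. n div 2) \<circ> h) (subword x A) y"
    using word_isom_comp word_isom_restrict[OF wx h AF] hA by fastforce
  moreover have "word_isom (\<lambda>n. n div 2) (subword ?c Od) z"
    by (rule word_isom_wconc_right) (use reflc Fc Od_def in auto)
  then have "word_isom ((\<lambda>n. n div 2) \<circ> h) (subword x (?Fx - A)) z"
    using word_isom_comp word_isom_restrict[OF wx h, of "?Fx - A"] hB by fastforce
  ultimately show ?thesis using word_iso_iff by blast
qed

lemma bij_betw_parity_join:
  assumes f: "bij_betw f A Y" and g: "bij_betw g B Z" and AB: "A \<inter> B = {}"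
  shows "bij_betw (\<lambda>a. if a \<in> A then 2 * f a else Suc (2 * g a)) (A \<union> B)
    ((\<lambda>p. 2 * p) ` Y \<union> (\<lambda>q. 2 * q + 1) ` Z)"
  unfolding bij_betw_def
proof
  let ?h = "\<lambda>a. if a \<in> A then 2 * f a else Suc (2 * g a)"
  show "inj_on ?h (A \<union> B)"
  proof (rule inj_onI)
    fix a b assume "a \<in> A \<union> B" "b \<in> A \<union> B" "?h a = ?h b"
    then show "a = b"
      using f g AB unfolding bij_betw_def inj_on_def by (auto split: if_splits) presburger+
  qed
  have "?h ` (A \<union> B) = (\<lambda>p. 2 * p) ` (f ` A) \<union> (\<lambda>q. 2 * q + 1) ` (g ` B)"
    using AB by (force simp: image_image)
  then show "?h ` (A \<union> B) = (\<lambda>p. 2 * p) ` Y \<union> (\<lambda>q. 2 * q + 1) ` Z"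
    using f g by (simp add: bij_betw_def)
qed

lemma wconc_join:
  assumes wx: "wword x" and A: "initial x A"
    and f: "word_isom f (subword x A) y" and g: "word_isom g (subword x (Field (fst x) - A)) z"
  shows "x \<simeq>w (y \<cdot>w z)"
proof -
  let ?Fx = "Field (fst x)" and ?B = "Field (fst x) - A"
  define h where "h a = (if a \<in> A then 2 * f a else Suc (2 * g a))" for a
  have AF: "A \<subseteq> ?Fx" using A initial_subset_Field by blast
  have FA: "Field (fst (subword x A)) = A" using Field_subword[OF wx AF] .
  have FB: "Field (fst (subword x ?B)) = ?B" using Field_subword[OF wx] by blast
  have "bij_betw h (A \<union> ?B) (Field (fst (y \<cdot>w z)))"
    unfolding h_def Field_wconc using f g FA FB
    by (intro bij_betw_parity_join) (auto simp: word_isom_def)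
  then have bij: "bij_betw h ?Fx (Field (fst (y \<cdot>w z)))" using AF by (simp add: Un_absorb1)
  have relA: "(p, q) \<in> fst x \<longleftrightarrow> (f p, f q) \<in> fst y" if "p \<in> A" "q \<in> A" for p q
    using word_isom_rel[OF f] FA that by (auto simp: fst_subword)
  have relB: "(p, q) \<in> fst x \<longleftrightarrow> (g p, g q) \<in> fst z" if "p \<in> ?B" "q \<in> ?B" for p q
    using word_isom_rel[OF g] FB that by (auto simp: fst_subword)
  have rel: "(p, q) \<in> fst x \<longleftrightarrow> (h p, h q) \<in> fst (y \<cdot>w z)" if pq: "p \<in> ?Fx" "q \<in> ?Fx" for p q
  proof (cases "p \<in> A"; cases "q \<in> A")
    assume "p \<in> A" "q \<in> A"
    then show ?thesis using relA unfolding h_def by simp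
  next
    assume pq': "p \<in> A" "q \<notin> A"
    have "(p, q) \<in> fst x \<or> (q, p) \<in> fst x"
      using wo_total[of "fst x" p q] wx pq unfolding wword_def by blast
    then have "(p, q) \<in> fst x" using pq' A unfolding initial_def by blast
    moreover have "f p \<in> Field (fst y)" "g q \<in> Field (fst z)"
      using word_isom_in[OF f] word_isom_in[OF g] FA FB pq pq' by auto
    ultimately show ?thesis using pq' unfolding h_def by simp
  next
    assume pq': "p \<notin> A" "q \<in> A"
    then have "(p, q) \<notin> fst x" using A unfolding initial_def by blast
    then show ?thesis using pq' unfolding h_def by simp
  next
    assume "p \<notin> A" "q \<notin> A"
    then show ?thesis using relB pq unfolding h_def by simp
  qed
  have "snd (y \<cdot>w z) (h p) = snd x p" if "p \<in> ?Fx" for p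
    using word_isom_label[OF f] word_isom_label[OF g] FA FB that unfolding h_def snd_wconc by auto
  then have "word_isom h x (y \<cdot>w z)" unfolding word_isom_def using bij rel by blast
  then show ?thesis using word_iso_iff by blast
qed

lemma word_iso_wconc_iff:
  assumes wx: "wword x"
  shows "x \<simeq>w (y \<cdot>w z) \<longleftrightarrow> (\<exists>A. initial x A \<and> subword x A \<simeq>w y \<and> subword x (Field (fst x) - A) \<simeq>w z)"
  using wconc_split[OF wx] wconc_join[OF wx] word_iso_iff by meson

lemma Field_letter[simp]: "Field (fst (letter a)) = {0}"
  unfolding letter_def by (simp add: Field_def)

lemma subword_iso_letter:
  assumes "wword x" "S \<subseteq> Field (fst x)" "subword x S \<simeq>w letter a"
  shows "\<exists>p. S = {p} \<and> snd x p = a"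
proof -
  obtain h where h: "word_isom h (subword x S) (letter a)" using assms word_iso_iff by blast
  have FS: "Field (fst (subword x S)) = S" using Field_subword assms by blast
  have b: "bij_betw h S {0}" using h FS unfolding word_isom_def by simp
  then have "finite S" "card S = 1" using bij_betw_finite bij_betw_same_card by fastforce+
  then obtain p where p: "S = {p}" using card_1_singletonE by blast
  have "snd (letter a) (h p) = snd (subword x S) p" using word_isom_label[OF h] FS p by blast
  then have "snd x p = a" by (simp add: letter_def)
  then show ?thesis using p by blast
qed

lemma subword_singleton_iso_letter:
  assumes "wword x" "p \<in> Field (fst x)"
  shows "subword x {p} \<simeq>w letter (snd x p)"
proof -
  have FS: "Field (fst (subword x {p})) = {p}" using Field_subword assms by blast
  have pp: "(p,p) \<in> fst x" using assms wword_refl by blast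
  have "word_isom (\<lambda>_. 0) (subword x {p}) (letter (snd x p))"
    unfolding word_isom_def FS using pp by (auto simp: letter_def fst_subword bij_betw_def)
  then show ?thesis using word_iso_iff by blast
qed

lemma initial_singleton_above:
  assumes "wword x" "p \<in> Field (fst x)"
  shows "initial (subword x (Field (fst x) - below x p)) {p}"
proof -
  have "p \<notin> below x p" by (simp add: below_def)
  then have FS: "Field (fst (subword x (Field (fst x) - below x p))) = Field (fst x) - below x p"
    using Field_subword assms by blast
  show ?thesis unfolding initial_def FS
    using assms \<open>p \<notin> below x p\<close> by (auto simp: fst_subword below_def)
qed

lemma initial_eq_below_first:
  assumes wx: "wword x" and A: "initial x A" and p: "p \<in> Field (fst x) - A"
    and i: "initial (subword x (Field (fst x) - A)) {p}"
  shows "A = below x p"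
proof
  show "A \<subseteq> below x p"
  proof
    fix a assume a: "a \<in> A"
    have aF: "a \<in> Field (fst x)" using a A unfolding initial_def by blast
    have "(a,p) \<in> fst x \<or> (p,a) \<in> fst x"
      using wo_total[of "fst x" a p] wx aF p unfolding wword_def by blast
    moreover have "(p,a) \<notin> fst x" using a A p unfolding initial_def by blast
    ultimately show "a \<in> below x p" using a p unfolding below_def by auto
  qed
next
  show "below x p \<subseteq> A"
  proof
    fix b assume b: "b \<in> below x p"
    have bF: "b \<in> Field (fst x)" using b below_subset_Field by blast
    show "b \<in> A"
    proof (rule ccontr)
      assume "b \<notin> A"
      then have "(b,p) \<in> fst (subword x (Field (fst x) - A))"
        using b bF p by (auto simp: below_def fst_subword)
      then have "b = p" using i unfolding initial_def by blast
      then show False using b by (simp add: below_def)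
    qed
  qed
qed

section \<open>The lexicographic order\<close>

definition iprefix :: "'a word \<Rightarrow> 'a word \<Rightarrow> bool" where
  "iprefix x y \<longleftrightarrow> (\<exists>B f. initial y B \<and> word_isom f x (subword y B))"

definition istr_less :: "('a::linorder) word \<Rightarrow> 'a word \<Rightarrow> bool" where
  "istr_less x y \<longleftrightarrow> (\<exists>a b f. a \<in> Field (fst x) \<and> b \<in> Field (fst y)
      \<and> word_isom f (subword x (below x a)) (subword y (below y b)) \<and> snd x a < snd y b)"

lemma wprefix_iff_iprefix:
  assumes wy: "wword y"
  shows "wprefix x y \<longleftrightarrow> iprefix x y"
proof
  assume "wprefix x y"
  then obtain z where "wword z" "y \<simeq>w (x \<cdot>w z)" unfolding wprefix_def by blast
  then obtain B where B: "initial y B" "subword y B \<simeq>w x"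
    using word_iso_wconc_iff[OF wy] by blast
  then show "iprefix x y" unfolding iprefix_def using word_iso_sym word_iso_iff by blast
next
  assume "iprefix x y"
  then obtain B f where B: "initial y B" "word_isom f x (subword y B)" unfolding iprefix_def
    by blast
  have "subword y B \<simeq>w x" using B(2) word_iso_sym word_iso_iff by blast
  moreover have "subword y (Field (fst y) - B) \<simeq>w subword y (Field (fst y) - B)"
    by (rule word_iso_refl)
  ultimately have "y \<simeq>w (x \<cdot>w subword y (Field (fst y) - B))"
    using word_iso_wconc_iff[OF wy] B(1) by blast
  then show "wprefix x y" unfolding wprefix_def using wword_subword[OF wy] by blast
qed

lemma str_decomp:
  assumes wx: "wword x" and h: "x \<simeq>w (c \<cdot>w (letter a \<cdot>w e))"
  shows "\<exists>p \<in> Field (fst x). subword x (below x p) \<simeq>w c \<and> snd x p = a"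
proof -
  obtain A where A: "initial x A" "subword x A \<simeq>w c"
    "subword x (Field (fst x) - A) \<simeq>w (letter a \<cdot>w e)"
    using word_iso_wconc_iff[OF wx] h by blast
  let ?x' = "subword x (Field (fst x) - A)"
  have wx': "wword ?x'" using wword_subword[OF wx] .
  have Fx': "Field (fst ?x') = Field (fst x) - A" using Field_subword[OF wx] by blast
  obtain A' where A': "initial ?x' A'" "subword ?x' A' \<simeq>w letter a"
    using word_iso_wconc_iff[OF wx'] A(3) by blast
  have A'F: "A' \<subseteq> Field (fst ?x')" using A' unfolding initial_def by blast
  obtain p where p: "A' = {p}" "snd ?x' p = a" using subword_iso_letter[OF wx' A'F A'(2)] by blast
  have pF: "p \<in> Field (fst x) - A" using A'F Fx' p by blast
  have "A = below x p" using initial_eq_below_first[OF wx A(1) pF] A'(1) p by simp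
  then show ?thesis using A(2) p pF by auto
qed

lemma word_iso_wconc_letter:
  assumes wz: "wword z" and r: "r \<in> Field (fst z)" and iso: "subword z (below z r) \<simeq>w c"
  shows "z \<simeq>w (c \<cdot>w (letter (snd z r) \<cdot>w subword z (Field (fst z) - below z r - {r})))"
proof -
  let ?z' = "subword z (Field (fst z) - below z r)"
  have wz': "wword ?z'" using wword_subword[OF wz] .
  have Fz': "Field (fst ?z') = Field (fst z) - below z r" using Field_subword[OF wz] by blast
  have rF: "r \<in> Field (fst ?z')" using Fz' r by (simp add: below_def)
  have i1: "initial ?z' {r}" using initial_singleton_above[OF wz r] .
  have i2: "subword ?z' {r} \<simeq>w letter (snd z r)"
    using subword_singleton_iso_letter[OF wz' rF] by simp
  have i3: "subword ?z' (Field (fst ?z') - {r}) = subword z (Field (fst z) - below z r - {r})"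
    unfolding Fz' subword_subword by (simp add: Int_absorb1 Diff_subset)
  have "?z' \<simeq>w (letter (snd z r) \<cdot>w subword z (Field (fst z) - below z r - {r}))"
    using word_iso_wconc_iff[OF wz'] i1 i2 i3 word_iso_refl by metis
  then show ?thesis using word_iso_wconc_iff[OF wz] initial_below[OF wz] iso by blast
qed

lemma str_less_iff_istr_less:
  assumes wx: "wword x" and wy: "wword y"
  shows "str_less x y \<longleftrightarrow> istr_less x y"
proof
  assume "str_less x y"
  then obtain c a b e e' where h: "a < b"
    "x \<simeq>w (c \<cdot>w (letter a \<cdot>w e))" "y \<simeq>w (c \<cdot>w (letter b \<cdot>w e'))"
    unfolding str_less_def by blast
  obtain p where p: "p \<in> Field (fst x)" "subword x (below x p) \<simeq>w c" "snd x p = a"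
    using str_decomp[OF wx h(2)] by blast
  obtain q where q: "q \<in> Field (fst y)" "subword y (below y q) \<simeq>w c" "snd y q = b"
    using str_decomp[OF wy h(3)] by blast
  have "subword x (below x p) \<simeq>w subword y (below y q)"
    using p q word_iso_sym word_iso_trans by blast
  then show "istr_less x y" unfolding istr_less_def using p q h(1) word_iso_iff by blast
next
  assume "istr_less x y"
  then obtain p q f where pq: "p \<in> Field (fst x)" "q \<in> Field (fst y)"
    "word_isom f (subword x (below x p)) (subword y (below y q))" "snd x p < snd y q"
      unfolding istr_less_def by blast
  let ?c = "subword x (below x p)"
  have hx: "x \<simeq>w (?c \<cdot>w (letter (snd x p) \<cdot>w subword x (Field (fst x) - below x p - {p})))"
    using word_iso_wconc_letter[OF wx pq(1)] word_iso_refl by blast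
  have "subword y (below y q) \<simeq>w ?c" using pq(3) word_iso_iff word_iso_sym by blast
  then have hy: "y \<simeq>w (?c \<cdot>w (letter (snd y q) \<cdot>w subword y (Field (fst y) - below y q - {q})))"
    using word_iso_wconc_letter[OF wy pq(2)] by blast
  show "str_less x y" unfolding str_less_def
    using hx hy pq(4) wword_subword[OF wx] wword_subword[OF wy] by blast
qed

lemma lex_le_iff:
  assumes "wword x" "wword y"
  shows "lex_le x y \<longleftrightarrow> iprefix x y \<or> istr_less x y"
  unfolding lex_le_def using wprefix_iff_iprefix[OF assms(2)] str_less_iff_istr_less[OF assms]
  by simp

lemma iprefix_trans:
  assumes wy: "wword y" and wz: "wword z" and "iprefix x y" "iprefix y z"
  shows "iprefix x z"
proof -
  obtain B f where Bf: "initial y B" "word_isom f x (subword y B)"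
    using assms(3) unfolding iprefix_def by blast
  obtain C g where Cg: "initial z C" "word_isom g y (subword z C)"
    using assms(4) unfolding iprefix_def by blast
  have t: "initial z (g ` B) \<and> word_isom g (subword y B) (subword z (g ` B))"
    using word_isom_initial_image[OF wy wz Cg(1) Cg(2) Bf(1)] .
  then show ?thesis unfolding iprefix_def using word_isom_comp[OF Bf(2)] by blast
qed

lemma istr_less_iprefix_trans:
  assumes wy: "wword y" and wz: "wword z" and "istr_less x y" "iprefix y z"
  shows "istr_less x z"
proof -
  obtain a b f where abf: "a \<in> Field (fst x)" "b \<in> Field (fst y)"
      "word_isom f (subword x (below x a)) (subword y (below y b))" "snd x a < snd y b"
    using assms(3) unfolding istr_less_def by blast
  obtain C g where Cg: "initial z C" "word_isom g y (subword z C)"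
    using assms(4) unfolding iprefix_def by blast
  have g': "word_isom g (subword y (Field (fst y))) (subword z C)"
    using Cg(2) by (simp add: subword_Field)
  note r = word_isom_initial_below[OF wy wz initial_Field Cg(1) g' abf(2)]
  have "g b \<in> Field (fst z)" using r Cg(1) initial_subset_Field by blast
  then show ?thesis unfolding istr_less_def using abf r word_isom_comp[OF abf(3)] by (metis)
qed

lemma istr_less_trans:
  assumes wx: "wword x" and wy: "wword y" and wz: "wword z" and "istr_less x y" "istr_less y z"
  shows "istr_less x z"
proof -
  obtain a b f where abf: "a \<in> Field (fst x)" "b \<in> Field (fst y)"
      "word_isom f (subword x (below x a)) (subword y (below y b))" "snd x a < snd y b"
    using assms(4) unfolding istr_less_def by blast
  obtain b' c g where bcg: "b' \<in> Field (fst y)" "c \<in> Field (fst z)"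
      "word_isom g (subword y (below y b')) (subword z (below z c))" "snd y b' < snd z c"
    using assms(5) unfolding istr_less_def by blast
  have tot: "(b,b') \<in> fst y \<or> (b',b) \<in> fst y"
    using wo_total[of "fst y" b b'] wy abf(2) bcg(1) unfolding wword_def by blast
  consider "b = b'" | "b \<in> below y b'" | "b' \<in> below y b"
    using tot unfolding below_def by blast
  then show ?thesis
  proof cases
    case 1
    then show ?thesis unfolding istr_less_def
      using abf bcg word_isom_comp[OF abf(3)] by (metis order.strict_trans)
  next
    case 2
    note r = word_isom_initial_below[OF wy wz initial_below[OF wy] initial_below[OF wz] bcg(3) 2]
    have "g b \<in> Field (fst z)" using r below_subset_Field by blast
    then show ?thesis unfolding istr_less_def using abf r word_isom_comp[OF abf(3)] by metis
  next
    case 3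
    have FA: "Field (fst (subword x (below x a))) = below x a"
      using Field_subword[OF wx below_subset_Field] .
    have FB: "Field (fst (subword y (below y b))) = below y b"
      using Field_subword[OF wy below_subset_Field] .
    obtain a' where a': "a' \<in> below x a" "f a' = b'"
      using word_isom_image[OF abf(3)] FA FB 3 by (metis imageE)
    note r =
      word_isom_initial_below[OF wx wy initial_below[OF wx] initial_below[OF wy] abf(3) a'(1)]
    have "a' \<in> Field (fst x)" using a' below_subset_Field by blast
    then show ?thesis unfolding istr_less_def using r a' bcg word_isom_comp[of f _ _ g] by metis
  qed
qed

lemma iprefix_istr_less_trans:
  assumes wx: "wword x" and wy: "wword y" and wz: "wword z" and "iprefix x y" "istr_less y z"
  shows "iprefix x z \<or> istr_less x z"
proof -
  obtain B f where Bf: "initial y B" "word_isom f x (subword y B)"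
    using assms(4) unfolding iprefix_def by blast
  obtain b c g where bcg: "b \<in> Field (fst y)" "c \<in> Field (fst z)"
      "word_isom g (subword y (below y b)) (subword z (below z c))" "snd y b < snd z c"
    using assms(5) unfolding istr_less_def by blast
  have BF: "B \<subseteq> Field (fst y)" using Bf(1) initial_subset_Field by blast
  show ?thesis
  proof (cases "B \<subseteq> below y b")
    case True
    have wyb: "wword (subword y (below y b))" using wword_subword[OF wy] .
    have i: "initial (subword y (below y b)) B"
      using initial_in_subword[OF Bf(1) True wy below_subset_Field] .
    have FU: "Field (fst (subword y (below y b))) = below y b"
      using Field_subword[OF wy below_subset_Field] .
    have t: "initial (subword z (below z c)) (g ` B)"
      "word_isom g (subword (subword y (below y b)) B) (subword (subword z (below z c)) (g ` B))"
      using word_isom_initial[OF bcg(3) i] word_isom_restrict[OF wyb bcg(3), of B] True FU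
      by simp_all
    have gB: "g ` B \<subseteq> below z c"
      using t initial_subset_Field Field_subword_subset by blast
    have "word_isom g (subword y B) (subword z (g ` B))"
      using t True gB by (simp add: subword_subword Int_absorb1)
    moreover have "initial z (g ` B)"
      using initial_subword_trans[OF initial_below[OF wz]] t by blast
    ultimately show ?thesis unfolding iprefix_def using word_isom_comp[OF Bf(2)] by blast
  next
    case False
    then have ub: "below y b \<subseteq> B"
      using initial_chain[OF wy Bf(1) initial_below[OF wy]] by blast
    obtain e where e: "e \<in> B" "e \<notin> below y b" using False by blast
    have "(b,e) \<in> fst y \<or> (e,b) \<in> fst y"
      using wo_total[of "fst y" b e] wy bcg(1) e BF unfolding wword_def by blast
    then have bB: "b \<in> B" using e Bf(1) unfolding initial_def below_def by blast
    have FB: "Field (fst (subword y B)) = B" using Field_subword[OF wy BF] .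
    obtain a' where a': "a' \<in> Field (fst x)" "f a' = b"
      using word_isom_image[OF Bf(2)] FB bB by (metis imageE)
    have f': "word_isom f (subword x (Field (fst x))) (subword y B)"
      using Bf(2) by (simp add: subword_Field)
    note r = word_isom_initial_below[OF wx wy initial_Field Bf(1) f' a'(1)]
    have "istr_less x z" unfolding istr_less_def using r a' bcg word_isom_comp[of f _ _ g] by metis
    then show ?thesis by blast
  qed
qed

lemma istr_less_irrefl:
  assumes wx: "wword x" shows "\<not> istr_less x x"
proof
  assume "istr_less x x"
  then obtain a b f where abf: "a \<in> Field (fst x)" "b \<in> Field (fst x)"
      "word_isom f (subword x (below x a)) (subword x (below x b))" "snd x a < snd x b"
    unfolding istr_less_def by blast
  have "below x a = below x b"
    using initial_iso_eq[OF wx initial_below[OF wx] initial_below[OF wx] abf(3)] .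
  then have "a = b" using below_inj[OF wx abf(1,2)] by blast
  then show False using abf(4) by simp
qed

lemma iprefix_antisym:
  assumes wx: "wword x" and wy: "wword y" and "iprefix x y" "iprefix y x"
  shows "x \<simeq>w y"
proof -
  obtain B f where Bf: "initial y B" "word_isom f x (subword y B)"
    using assms(3) unfolding iprefix_def by blast
  obtain A g where Ag: "initial x A" "word_isom g y (subword x A)"
    using assms(4) unfolding iprefix_def by blast
  have t: "initial x (g ` B) \<and> word_isom g (subword y B) (subword x (g ` B))"
    using word_isom_initial_image[OF wy wx Ag(1) Ag(2) Bf(1)] .
  have c: "word_isom (g \<circ> f) (subword x (Field (fst x))) (subword x (g ` B))"
    using word_isom_comp[OF Bf(2)] t by (simp add: subword_Field)
  have e1: "Field (fst x) = g ` B" using initial_iso_eq[OF wx initial_Field _ c] t by blast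
  have AF: "A \<subseteq> Field (fst x)" using Ag(1) initial_subset_Field by blast
  have gF: "g ` Field (fst y) = A" using word_isom_image[OF Ag(2)] Field_subword[OF wx AF] by simp
  have BF: "B \<subseteq> Field (fst y)" using Bf(1) initial_subset_Field by blast
  have "g ` Field (fst y) = g ` B" using gF e1 AF BF by blast
  then have "B = Field (fst y)" using word_isom_inj[OF Ag(2)] BF
    by (metis Field_subword_subset inj_on_image_eq_iff subset_refl subword_Field)
  then show ?thesis using Bf(2) subword_Field word_iso_iff by metis
qed

lemma word_isom_iprefix: "wword y \<Longrightarrow> word_isom f x y \<Longrightarrow> iprefix x y"
  unfolding iprefix_def using initial_Field subword_Field by metis

lemma word_iso_iprefix: "wword y \<Longrightarrow> x \<simeq>w y \<Longrightarrow> iprefix x y"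
  using word_isom_iprefix word_iso_iff by blast

lemma lex_refl: "wword x \<Longrightarrow> lex_le x x"
  using lex_le_iff word_iso_iprefix word_iso_refl by blast

lemma lex_trans:
  assumes "wword x" "wword y" "wword z" "lex_le x y" "lex_le y z"
  shows "lex_le x z"
proof -
  have a: "iprefix x y \<or> istr_less x y" using assms(1,2,4) lex_le_iff by blast
  have b: "iprefix y z \<or> istr_less y z" using assms(2,3,5) lex_le_iff by blast
  have "iprefix x z \<or> istr_less x z"
    using a b iprefix_trans[OF assms(2,3)] iprefix_istr_less_trans[OF assms(1-3)]
      istr_less_iprefix_trans[OF assms(2,3)] istr_less_trans[OF assms(1-3)] by blast
  then show ?thesis using lex_le_iff assms(1,3) by blast
qed

lemma lex_antisym:
  assumes wx: "wword x" and wy: "wword y" and "lex_le x y" "lex_le y x"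
  shows "x \<simeq>w y"
proof -
  have "iprefix x y \<or> istr_less x y" "iprefix y x \<or> istr_less y x"
    using assms lex_le_iff by blast+
  then show ?thesis
    using iprefix_antisym[OF wx wy] istr_less_iprefix_trans[OF wy wx]
      istr_less_trans[OF wx wy wx] istr_less_iprefix_trans[OF wx wy]
      istr_less_irrefl[OF wx] istr_less_irrefl[OF wy] by blast
qed

lemma iprefix_istr_less_extend:
  assumes wx: "wword x" and wy: "wword y" and "iprefix x y" "istr_less x z"
  shows "istr_less y z"
proof -
  obtain B g where B: "initial y B" and g: "word_isom g x (subword y B)"
    using assms(3) unfolding iprefix_def by blast
  obtain a c f where a: "a \<in> Field (fst x)" and c: "c \<in> Field (fst z)"
    and f: "word_isom f (subword x (below x a)) (subword z (below z c))"
    and lab: "snd x a < snd z c"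
    using assms(4) unfolding istr_less_def by blast
  have "word_isom g (subword x (Field (fst x))) (subword y B)" using g by (simp add: subword_Field)
  note r = word_isom_initial_below[OF wx wy initial_Field B this a]
  then obtain h where "word_isom h (subword y (below y (g a))) (subword z (below z c))"
    using f word_iso_iff word_iso_sym word_iso_trans by meson
  moreover have "g a \<in> Field (fst y)" using r B initial_subset_Field by blast
  moreover have "snd y (g a) < snd z c" using r lab by simp
  ultimately show ?thesis unfolding istr_less_def using c by blast
qed

lemma lex_le_not_istr_less:
  assumes wx: "wword x" and wy: "wword y" and "lex_le x y"
  shows "\<not> istr_less y x"
proof
  assume yx: "istr_less y x"
  from \<open>lex_le x y\<close> consider "iprefix x y" | "istr_less x y"
    using lex_le_iff[OF wx wy] by blast
  then show False
  proof cases
    case 1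
    then show False using istr_less_iprefix_trans[OF wx wy yx] istr_less_irrefl[OF wy] by blast
  next
    case 2
    then show False using istr_less_trans[OF wx wy wx _ yx] istr_less_irrefl[OF wx] by blast
  qed
qed

lemma not_lex_le_of_iso:
  assumes x: "wword x" and y: "wword y" and y': "wword y'"
    and iso: "y' \<simeq>w y" and le: "lex_le y x" and ne: "\<not> y \<simeq>w x"
  shows "\<not> lex_le x y'"
proof
  assume "lex_le x y'"
  moreover have "lex_le y' y" using word_iso_iprefix[OF y iso] lex_le_iff[OF y' y] by blast
  ultimately have "lex_le x y" using lex_trans[OF x y' y] by blast
  then show False using lex_antisym[OF y x le] ne by blast
qed

lemma initial_subset_of_lex_le:
  assumes wx: "wword x" and A: "initial x A" and B: "initial x B"
    and a: "wword a" "a \<simeq>w subword x A" and b: "wword b" "b \<simeq>w subword x B"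
    and ba: "lex_le b a"
  shows "B \<subseteq> A"
proof -
  have "B \<subseteq> A" if AB: "A \<subseteq> B"
  proof -
    have xA: "wword (subword x A)" and xB: "wword (subword x B)"
      using wword_subword[OF wx] by blast+
    have "initial (subword x B) A"
      using initial_in_subword[OF A AB wx] B initial_subset_Field by blast
    moreover have "subword (subword x B) A = subword x A"
      using AB by (simp add: subword_subword Int_absorb1)
    ultimately have "iprefix (subword x A) (subword x B)" unfolding iprefix_def
      using word_isom_id by metis
    moreover have "iprefix a (subword x A)" using word_iso_iprefix[OF xA a(2)] .
    moreover have "iprefix (subword x B) b" using word_iso_iprefix[OF b(1) word_iso_sym[OF b(2)]] .
    ultimately have "iprefix a b"
      using iprefix_trans[OF xA b(1)] iprefix_trans[OF xB b(1)] by blast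
    then have "a \<simeq>w b" using lex_antisym[OF a(1) b(1) _ ba] lex_le_iff[OF a(1) b(1)] by blast
    then have "subword x A \<simeq>w subword x B"
      using word_iso_trans word_iso_sym a(2) b(2) by blast
    then show ?thesis using initial_iso_eq[OF wx A B] word_iso_iff by blast
  qed
  then show ?thesis using initial_chain[OF wx A B] by blast
qed

lemma iprefix_chain_eventually_constant:
  fixes v :: "nat \<Rightarrow> ('a::linorder) word"
  assumes I: "Well_order I" and i: "i \<in> Field I" and wx: "wword x"
    and v: "\<forall>i\<in>Field I. wword (v i) \<and> iprefix (v i) x"
    and noninc: "\<forall>i\<in>Field I. \<forall>j\<in>Field I. (i, j) \<in> I \<longrightarrow> lex_le (v j) (v i)"
  shows "\<exists>i0\<in>Field I. \<forall>j\<in>Field I. (i0, j) \<in> I \<longrightarrow> v j \<simeq>w v i0"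
proof -
  obtain C where C: "\<forall>i\<in>Field I. initial x (C i) \<and> v i \<simeq>w subword x (C i)"
    using v unfolding iprefix_def word_iso_iff by metis
  have antitone: "C j \<subseteq> C i" if "i \<in> Field I" "j \<in> Field I" "(i, j) \<in> I" for i j
    using initial_subset_of_lex_le[OF wx] C v noninc that by blast
  obtain i0 where i0: "i0 \<in> Field I" and least: "\<forall>j\<in>Field I. C i0 \<subseteq> C j"
    using initial_family_least[OF wx _ i] C by blast
  have "v j \<simeq>w v i0" if "j \<in> Field I" "(i0, j) \<in> I" for j
  proof -
    have "C j = C i0" using antitone[OF i0 that] least that(1) by blast
    then show ?thesis using C that(1) i0 word_iso_sym word_iso_trans by metis
  qed
  then show ?thesis using i0 by blast
qed

lemma noninc_all_iso_first:
  fixes v :: "nat \<Rightarrow> ('a::linorder) word"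
  assumes I: "Well_order I" and v: "\<forall>i\<in>Field I. wword (v i)"
    and noninc: "\<forall>i\<in>Field I. \<forall>j\<in>Field I. (i, j) \<in> I \<longrightarrow> lex_le (v j) (v i)"
    and z: "z \<in> Field I" and least: "\<forall>j\<in>Field I. (z, j) \<in> I"
    and i0: "i0 \<in> Field I" and tail: "\<forall>j\<in>Field I. (i0, j) \<in> I \<longrightarrow> v j \<simeq>w v i0"
    and iso: "v i0 \<simeq>w v z"
  shows "\<forall>j\<in>Field I. v j \<simeq>w v z"
proof
  fix j assume j: "j \<in> Field I"
  consider "(i0, j) \<in> I" | "(j, i0) \<in> I" using wo_total[OF I i0 j] by blast
  then show "v j \<simeq>w v z"
  proof cases
    case 1
    then show ?thesis using tail j iso word_iso_trans by blast
  next
    case 2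
    have vz: "wword (v z)" and vj: "wword (v j)" and vi0: "wword (v i0)" using v z j i0 by blast+
    have "iprefix (v z) (v i0)" using word_iso_iprefix[OF vi0] iso word_iso_sym by blast
    then have "lex_le (v z) (v i0)" using lex_le_iff[OF vz vi0] by blast
    then have "lex_le (v z) (v j)" using lex_trans[OF vz vi0 vj] noninc 2 j i0 by blast
    moreover have "lex_le (v j) (v z)" using noninc least z j by blast
    ultimately show ?thesis using lex_antisym[OF vj vz] by blast
  qed
qed

lemma prime_wword: "prime_word x \<Longrightarrow> wword x"
  unfolding prime_word_def primitive_def by blast

definition le_suffixes :: "('a::linorder) word \<Rightarrow> bool" where
  "le_suffixes p \<longleftrightarrow>
    (\<forall>A. initial p A \<and> A \<noteq> Field (fst p) \<longrightarrow> lex_le p (subword p (Field (fst p) - A)))"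

lemma le_suffixes_prime:
  assumes pr: "prime_word x" shows "le_suffixes x"
  unfolding le_suffixes_def
proof (intro allI impI)
  fix A assume A: "initial x A \<and> A \<noteq> Field (fst x)"
  have wx: "wword x" using prime_wword[OF pr] .
  have AF: "A \<subseteq> Field (fst x)" using A initial_subset_Field by blast
  show "lex_le x (subword x (Field (fst x) - A))"
  proof (cases "A = {}")
    case True
    then show ?thesis using lex_refl[OF wx] by (simp add: subword_Field)
  next
    case False
    have c: "x \<simeq>w (subword x A \<cdot>w subword x (Field (fst x) - A))"
      using word_iso_wconc_iff[OF wx] A word_iso_refl by blast
    have "Field (fst (subword x A)) \<noteq> {}" using Field_subword[OF wx AF] False by simp
    moreover have "Field (fst (subword x (Field (fst x) - A))) \<noteq> {}"
      using Field_subword[OF wx] A AF by auto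
    ultimately show ?thesis using pr c wword_subword[OF wx] unfolding prime_word_def by blast
  qed
qed

section \<open>Ordered products\<close>

definition blk :: "nat \<Rightarrow> nat" where "blk n = fst (prod_decode n)"

definition pos :: "nat \<Rightarrow> nat" where "pos n = snd (prod_decode n)"

definition blocks :: "(nat \<Rightarrow> 'a word) \<Rightarrow> nat set \<Rightarrow> nat set" where
  "blocks v S = {n. blk n \<in> S \<and> pos n \<in> Field (fst (v (blk n)))}"

lemma blk_enc[simp]: "blk (prod_encode (i,p)) = i" by (simp add: blk_def)

lemma pos_enc[simp]: "pos (prod_encode (i,p)) = p" by (simp add: pos_def)

lemma enc_blk_pos: "prod_encode (blk n, pos n) = n" by (simp add: blk_def pos_def)

lemma blk_pos_eq: "blk m = blk n \<Longrightarrow> pos m = pos n \<Longrightarrow> m = n"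
  by (metis enc_blk_pos)

lemma blocks_Diff: "blocks v S - blocks v S' = blocks v (S - S')" unfolding blocks_def by auto

lemma blocks_mono: "S \<subseteq> S' \<Longrightarrow> blocks v S \<subseteq> blocks v S'" unfolding blocks_def by auto

lemma in_blocks: "n \<in> blocks v S \<longleftrightarrow> blk n \<in> S \<and> pos n \<in> Field (fst (v (blk n)))"
  unfolding blocks_def by auto

lemma rel_wprod:
  "(m, n) \<in> fst (wprod J v) \<longleftrightarrow>
    blk m \<in> Field J \<and> blk n \<in> Field J \<and> pos m \<in> Field (fst (v (blk m)))
    \<and> pos n \<in> Field (fst (v (blk n)))
    \<and> ((blk m \<noteq> blk n \<and> (blk m, blk n) \<in> J) \<or> (blk m = blk n \<and> (pos m, pos n) \<in> fst (v (blk m))))"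
proof -
  have "(m, n) = (prod_encode (blk m, pos m), prod_encode (blk n, pos n))"
    by (simp add: enc_blk_pos)
  then show ?thesis unfolding wprod_def by auto
qed

lemma snd_wprod: "snd (wprod J v) n = snd (v (blk n)) (pos n)"
  unfolding wprod_def blk_def pos_def by simp

lemma Field_wprod:
  assumes J: "Well_order J" and v: "\<forall>i\<in>Field J. wword (v i)"
  shows "Field (fst (wprod J v)) = blocks v (Field J)"
proof
  show "Field (fst (wprod J v)) \<subseteq> blocks v (Field J)"
  proof
    fix n assume "n \<in> Field (fst (wprod J v))"
    then obtain m where "(n,m) \<in> fst (wprod J v) \<or> (m,n) \<in> fst (wprod J v)"
      unfolding Field_def by blast
    then show "n \<in> blocks v (Field J)" unfolding rel_wprod in_blocks by blast
  qed
  show "blocks v (Field J) \<subseteq> Field (fst (wprod J v))"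
  proof
    fix n assume n: "n \<in> blocks v (Field J)"
    have "(blk n, blk n) \<in> J" using n J wo_refl by (auto simp: in_blocks)
    have wv: "wword (v (blk n))" using n v by (auto simp: in_blocks)
    moreover have "(pos n, pos n) \<in> fst (v (blk n))"
      using n wword_refl[OF wv] by (auto simp: in_blocks)
    ultimately have "(n,n) \<in> fst (wprod J v)" using n by (auto simp: rel_wprod in_blocks)
    then show "n \<in> Field (fst (wprod J v))" by (rule FieldI1)
  qed
qed

lemma rel_wprod_lt:
  "m \<in> blocks v (Field J) \<Longrightarrow> n \<in> blocks v (Field J) \<Longrightarrow> blk m \<noteq> blk n \<Longrightarrow>
    (blk m, blk n) \<in> J \<Longrightarrow> (m, n) \<in> fst (wprod J v)"
  by (simp add: rel_wprod in_blocks)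

lemma word_isom_block:
  assumes J: "Well_order J" and v: "\<forall>i\<in>Field J. wword (v i)" and wW: "wword (wprod J v)"
    and b: "i \<in> Field J"
  shows "word_isom pos (subword (wprod J v) (blocks v {i})) (v i)"
proof -
  have sub: "blocks v {i} \<subseteq> Field (fst (wprod J v))"
    using Field_wprod[OF J v] b blocks_mono by blast
  have F: "Field (fst (subword (wprod J v) (blocks v {i}))) = blocks v {i}"
    using Field_subword[OF wW sub] .
  show ?thesis unfolding word_isom_def F
  proof (intro conjI ballI)
    show "bij_betw pos (blocks v {i}) (Field (fst (v i)))"
      unfolding bij_betw_def
    proof
      show "inj_on pos (blocks v {i})" unfolding inj_on_def
        by (auto simp: in_blocks intro: blk_pos_eq)
      show "pos ` blocks v {i} = Field (fst (v i))"
      proof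
        show "pos ` blocks v {i} \<subseteq> Field (fst (v i))" by (auto simp: in_blocks)
        show "Field (fst (v i)) \<subseteq> pos ` blocks v {i}"
        proof
          fix q assume "q \<in> Field (fst (v i))"
          then have "prod_encode (i, q) \<in> blocks v {i}" by (simp add: in_blocks)
          then show "q \<in> pos ` blocks v {i}" by (metis image_eqI pos_enc)
        qed
      qed
    qed
  next
    fix m n assume "m \<in> blocks v {i}" "n \<in> blocks v {i}"
    then show "(m, n) \<in> fst (subword (wprod J v) (blocks v {i})) \<longleftrightarrow> (pos m, pos n) \<in> fst (v i)"
      using b by (auto simp: fst_subword rel_wprod in_blocks)
  next
    fix n assume "n \<in> blocks v {i}"
    then show "snd (v i) (pos n) = snd (subword (wprod J v) (blocks v {i})) n"
      by (auto simp: snd_wprod in_blocks)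
  qed
qed

lemma Field_Restr_Well_order:
  assumes "Well_order J" "S \<subseteq> Field J" shows "Field (Restr J S) = S"
proof
  show "Field (Restr J S) \<subseteq> S" by (auto simp: Field_def)
  show "S \<subseteq> Field (Restr J S)" using assms by (auto intro: FieldI1 dest: wo_refl)
qed

lemma subword_blocks_wprod:
  assumes J: "Well_order J" and S: "S \<subseteq> Field J"
  shows "subword (wprod J v) (blocks v S) = wprod (Restr J S) v"
proof -
  have FS: "Field (Restr J S) = S" using Field_Restr_Well_order[OF J S] .
  have "fst (subword (wprod J v) (blocks v S)) = fst (wprod (Restr J S) v)"
  proof (rule set_eqI)
    fix x :: "nat \<times> nat"
    obtain m n where x: "x = (m,n)" by (cases x)
    show "x \<in> fst (subword (wprod J v) (blocks v S)) \<longleftrightarrow> x \<in> fst (wprod (Restr J S) v)"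
      unfolding x fst_subword using S by (auto simp: rel_wprod in_blocks FS)
  qed
  moreover have "snd (subword (wprod J v) (blocks v S)) = snd (wprod (Restr J S) v)"
    by (auto simp: snd_wprod)
  ultimately show ?thesis by (metis prod.collapse)
qed

lemma bij_betw_blocks:
  assumes h: "\<forall>i\<in>S. bij_betw (h i) (Field (fst (v i))) (Field (fst (v' i)))"
  shows "bij_betw (\<lambda>n. prod_encode (blk n, h (blk n) (pos n))) (blocks v S) (blocks v' S)"
  unfolding bij_betw_def
proof
  let ?H = "\<lambda>n. prod_encode (blk n, h (blk n) (pos n))"
  show "inj_on ?H (blocks v S)"
  proof (rule inj_onI)
    fix m n assume m: "m \<in> blocks v S" and n: "n \<in> blocks v S" and e: "?H m = ?H n"
    have b: "blk m = blk n" using arg_cong[OF e, of blk] by simp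
    have "h (blk m) (pos m) = h (blk m) (pos n)" using arg_cong[OF e, of pos] b by simp
    moreover have "inj_on (h (blk m)) (Field (fst (v (blk m))))"
      using h m by (simp add: in_blocks bij_betw_def)
    ultimately have "pos m = pos n" using m n b by (simp add: in_blocks inj_on_eq_iff)
    then show "m = n" using b blk_pos_eq by blast
  qed
  show "?H ` blocks v S = blocks v' S"
  proof
    show "?H ` blocks v S \<subseteq> blocks v' S"
    proof (rule image_subsetI)
      fix n assume "n \<in> blocks v S"
      then have n: "blk n \<in> S" "pos n \<in> Field (fst (v (blk n)))"
        by (simp_all add: in_blocks)
      have "h (blk n) (pos n) \<in> Field (fst (v' (blk n)))"
        using bij_betw_apply[OF h[rule_format, OF n(1)] n(2)] .
      then show "?H n \<in> blocks v' S" using n(1) by (simp add: in_blocks)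
    qed
    show "blocks v' S \<subseteq> ?H ` blocks v S"
    proof
      fix n assume n: "n \<in> blocks v' S"
      then have n': "blk n \<in> S" "pos n \<in> Field (fst (v' (blk n)))"
        by (simp_all add: in_blocks)
      then have "pos n \<in> h (blk n) ` Field (fst (v (blk n)))"
        unfolding bij_betw_imp_surj_on[OF h[rule_format, OF n'(1)]] by simp
      then obtain q where q: "q \<in> Field (fst (v (blk n)))" "h (blk n) q = pos n"
        by (metis imageE)
      then have "prod_encode (blk n, q) \<in> blocks v S" "?H (prod_encode (blk n, q)) = n"
        using n by (simp_all add: in_blocks enc_blk_pos)
      then show "n \<in> ?H ` blocks v S" by force
    qed
  qed
qed

lemma wprod_pointwise_iso:
  assumes J: "Well_order J" and v: "\<forall>i\<in>Field J. wword (v i)" and v': "\<forall>i\<in>Field J. wword (v' i)"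
    and iso: "\<forall>i\<in>Field J. v i \<simeq>w v' i"
  shows "wprod J v \<simeq>w wprod J v'"
proof -
  obtain h where h: "\<forall>i\<in>Field J. word_isom (h i) (v i) (v' i)"
    using iso unfolding word_iso_iff by metis
  define H where "H n = prod_encode (blk n, h (blk n) (pos n))" for n
  have hin: "\<And>n. n \<in> blocks v (Field J) \<Longrightarrow> h (blk n) (pos n) \<in> Field (fst (v' (blk n)))"
    using h word_isom_in by (fastforce simp: in_blocks)
  have "word_isom H (wprod J v) (wprod J v')"
    unfolding word_isom_def Field_wprod[OF J v] Field_wprod[OF J v']
  proof (intro conjI ballI)
    show "bij_betw H (blocks v (Field J)) (blocks v' (Field J))"
      unfolding H_def using h by (intro bij_betw_blocks) (simp add: word_isom_def)
  next
    fix m n assume m: "m \<in> blocks v (Field J)" and n: "n \<in> blocks v (Field J)"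
    have "blk m = blk n \<Longrightarrow> (pos m, pos n) \<in> fst (v (blk m))
        \<longleftrightarrow> (h (blk m) (pos m), h (blk m) (pos n)) \<in> fst (v' (blk m))"
      using h m n word_isom_rel by (metis in_blocks)
    then show "(m, n) \<in> fst (wprod J v) \<longleftrightarrow> (H m, H n) \<in> fst (wprod J v')"
      using m n hin[OF m] hin[OF n] by (auto simp: rel_wprod H_def in_blocks)
  next
    fix n assume n: "n \<in> blocks v (Field J)"
    then have "word_isom (h (blk n)) (v (blk n)) (v' (blk n))" using h by (auto simp: in_blocks)
    from word_isom_label[OF this, of "pos n"] n
    show "snd (wprod J v') (H n) = snd (wprod J v) n" by (simp add: snd_wprod H_def in_blocks)
  qed
  then show ?thesis using word_iso_iff by blast
qed

lemma primitive_ne: "primitive x \<Longrightarrow> Field (fst x) \<noteq> {}"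
proof
  assume p: "primitive x" and e: "Field (fst x) = {}"
  have w: "wword x" using p unfolding primitive_def by blast
  have wo: "Well_order ({} :: nat rel)" by (simp add: well_order_on_def linear_order_on_def
        partial_order_on_def preorder_on_def refl_on_def trans_def antisym_def total_on_def)
  have F0: "Field (fst (wpow x {})) = {}" unfolding wpow_def wprod_def by (simp add: Field_def)
  have "fst x = {}" using e by (auto simp: Field_def)
  then have "x \<simeq>w wpow x {}" unfolding word_iso_def using F0 e by (simp add: bij_betw_def)
  then have "card (Field ({} :: nat rel)) = 1" using p w wo unfolding primitive_def by blast
  then show False by simp
qed

lemma primitive_iso_wprod_const:
  assumes x: "primitive x" and J: "Well_order J" and y: "wword y"
    and v: "\<forall>i\<in>Field J. wword (v i) \<and> v i \<simeq>w y" and iso: "x \<simeq>w wprod J v"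
  shows "card (Field J) = 1 \<and> y \<simeq>w x"
proof -
  have "wprod J v \<simeq>w wprod J (\<lambda>_. y)"
    by (rule wprod_pointwise_iso[OF J]) (use v y in auto)
  then have "x \<simeq>w wpow y J" unfolding wpow_def using iso word_iso_trans by blast
  then show ?thesis using x y J unfolding primitive_def by blast
qed

definition blocks_before :: "nat rel \<Rightarrow> (nat \<Rightarrow> 'a word) \<Rightarrow> nat \<Rightarrow> nat set" where
  "blocks_before J v i = blocks v {j. (j, i) \<in> J \<and> j \<noteq> i}"

lemma initial_blocks:
  assumes J: "Well_order J" and v: "\<forall>i\<in>Field J. wword (v i)"
    and S: "S \<subseteq> Field J" and down: "\<forall>i\<in>S. \<forall>j. (j, i) \<in> J \<longrightarrow> j \<in> S"
  shows "initial (wprod J v) (blocks v S)"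
  unfolding initial_def Field_wprod[OF J v]
proof (intro conjI ballI allI impI)
  show "blocks v S \<subseteq> blocks v (Field J)" using S blocks_mono by blast
  fix m n assume "n \<in> blocks v S" "(m, n) \<in> fst (wprod J v)"
  then show "m \<in> blocks v S" using down by (auto simp: rel_wprod in_blocks)
qed

lemma initial_blocks_before:
  assumes J: "Well_order J" and v: "\<forall>i\<in>Field J. wword (v i)"
  shows "initial (wprod J v) (blocks_before J v i)"
  unfolding blocks_before_def
  by (rule initial_blocks[OF J v]) (auto intro: FieldI1 wo_trans[OF J] dest: wo_antisym[OF J])

lemma blocks_before_subset_below:
  assumes J: "Well_order J" and D: "D \<in> blocks v (Field J)"
  shows "blocks_before J v (blk D) \<subseteq> below (wprod J v) D"
proof
  fix m assume m: "m \<in> blocks_before J v (blk D)"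
  then have "m \<in> blocks v (Field J)" "(blk m, blk D) \<in> J" "blk m \<noteq> blk D"
    unfolding blocks_before_def by (auto simp: in_blocks intro: FieldI1)
  then show "m \<in> below (wprod J v) D" using D rel_wprod_lt unfolding below_def by fastforce
qed

lemma initial_wprod_subset:
  assumes J: "Well_order J" and v: "\<forall>i\<in>Field J. wword (v i)"
    and B: "initial (wprod J v) B" and e: "e \<in> blocks v {i} - B" and i: "i \<in> Field J"
  shows "B \<subseteq> blocks_before J v i \<union> blocks v {i}"
proof
  fix m assume m: "m \<in> B"
  then have mF: "m \<in> blocks v (Field J)"
    using B Field_wprod[OF J v] initial_subset_Field by blast
  show "m \<in> blocks_before J v i \<union> blocks v {i}"
  proof (rule ccontr)
    assume "m \<notin> blocks_before J v i \<union> blocks v {i}"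
    then have "(i, blk m) \<in> J" "i \<noteq> blk m"
      using mF i wo_total[OF J] unfolding blocks_before_def by (auto simp: in_blocks)
    then have "(e, m) \<in> fst (wprod J v)"
      using e mF i by (intro rel_wprod_lt) (auto simp: in_blocks)
    then show False using B m e unfolding initial_def by blast
  qed
qed

lemma initial_block_part:
  assumes J: "Well_order J" and v: "\<forall>i\<in>Field J. wword (v i)" and W: "wword (wprod J v)"
    and B: "initial (wprod J v) B" and i: "i \<in> Field J"
    and within: "B \<subseteq> blocks_before J v i \<union> blocks v {i}"
  shows "initial (subword (wprod J v) (blocks v {i})) (B - blocks_before J v i)"
proof -
  have "blocks v {i} \<subseteq> Field (fst (wprod J v))"
    using Field_wprod[OF J v] i blocks_mono by blast
  then have F: "Field (fst (subword (wprod J v) (blocks v {i}))) = blocks v {i}"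
    using Field_subword[OF W] by blast
  show ?thesis
    unfolding initial_def F using within B
    by (auto simp: fst_subword initial_def blocks_before_def in_blocks)
qed

lemma initial_wprod_cases:
  assumes J: "Well_order J" and v: "\<forall>i\<in>Field J. wword (v i)" and B: "initial (wprod J v) B"
  obtains T where "T \<subseteq> Field J" "B = blocks v T"
  | i where "i \<in> Field J" "blocks_before J v i \<subseteq> B" "B \<subseteq> blocks_before J v i \<union> blocks v {i}"
      "B - blocks_before J v i \<noteq> {}"
proof -
  have BF: "B \<subseteq> blocks v (Field J)"
    using B Field_wprod[OF J v] initial_subset_Field by blast
  define T where "T = {i \<in> Field J. blocks v {i} \<subseteq> B}"
  have TB: "blocks v T \<subseteq> B"
  proof
    fix n assume "n \<in> blocks v T"
    then have "n \<in> blocks v {blk n}" "blocks v {blk n} \<subseteq> B" unfolding T_def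
      by (auto simp: in_blocks)
    then show "n \<in> B" by blast
  qed
  show ?thesis
  proof (cases "B = blocks v T")
    case True
    moreover have "T \<subseteq> Field J" unfolding T_def by blast
    ultimately show ?thesis using that(1) by blast
  next
    case False
    then obtain E where E: "E \<in> B" "E \<notin> blocks v T" using TB by blast
    define i where "i = blk E"
    have i: "i \<in> Field J" and Ei: "E \<in> blocks v {i}"
      using E BF unfolding i_def by (auto simp: in_blocks)
    have "i \<notin> T" using E(2) Ei by (auto simp: in_blocks)
    then obtain e where e: "e \<in> blocks v {i} - B" using i unfolding T_def by blast
    have "blocks_before J v i \<subseteq> below (wprod J v) E"
      using blocks_before_subset_below[OF J, of E v] E BF unfolding i_def by blast
    then have "blocks_before J v i \<subseteq> B" using initial_below_subset[OF B E(1)] by blast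
    moreover have "E \<notin> blocks_before J v i" unfolding blocks_before_def i_def
      by (simp add: in_blocks)
    ultimately show ?thesis using that(2) i initial_wprod_subset[OF J v B e i] E(1) by blast
  qed
qed

lemma below_wprod:
  assumes J: "Well_order J" and v: "\<forall>i\<in>Field J. wword (v i)" and W: "wword (wprod J v)"
    and D: "D \<in> blocks v (Field J)"
  shows "blocks_before J v (blk D) \<subseteq> below (wprod J v) D"
    and "below (wprod J v) D \<subseteq> blocks_before J v (blk D) \<union> blocks v {blk D}"
    and "pos ` (below (wprod J v) D - blocks_before J v (blk D)) = below (v (blk D)) (pos D)"
proof -
  let ?W = "wprod J v" and ?i = "blk D"
  let ?L = "blocks_before J v ?i" and ?B = "below ?W D"
  have i: "?i \<in> Field J" and Di: "D \<in> blocks v {?i}" using D by (auto simp: in_blocks)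
  show "?L \<subseteq> ?B" using blocks_before_subset_below[OF J D] .
  have "D \<in> blocks v {?i} - ?B" using Di by (simp add: below_def)
  then show within: "?B \<subseteq> ?L \<union> blocks v {?i}"
    using initial_wprod_subset[OF J v initial_below[OF W] _ i] by blast
  have "?L \<inter> blocks v {?i} = {}" unfolding blocks_before_def by (auto simp: in_blocks)
  then have "?B - ?L = below (subword ?W (blocks v {?i})) D"
    using within Di by (auto simp: below_subword)
  moreover have "blocks v {?i} \<subseteq> Field (fst ?W)"
    using Field_wprod[OF J v] i blocks_mono by blast
  ultimately show "pos ` (?B - ?L) = below (v ?i) (pos D)"
    using word_isom_below[OF word_isom_block[OF J v W i]] Field_subword[OF W] Di by metis
qed

lemma iprefix_first_wprod:
  assumes J: "Well_order J" and v: "\<forall>i\<in>Field J. wword (v i)" and W: "wword (wprod J v)"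
    and i: "i \<in> Field J" and least: "\<forall>j\<in>Field J. (i, j) \<in> J"
  shows "iprefix (v i) (wprod J v)"
proof -
  have "initial (wprod J v) (blocks v {i})"
    by (rule initial_blocks[OF J v]) (use i least wo_antisym[OF J] in \<open>auto intro: FieldI1\<close>)
  moreover have "word_isom pos (subword (wprod J v) (blocks v {i})) (v i)"
    using word_isom_block[OF J v W i] .
  ultimately show ?thesis unfolding iprefix_def using word_isom_inv by blast
qed

lemma lex_le_wprod_tail:
  assumes J: "Well_order J" and v: "\<forall>i\<in>Field J. wword (v i)" and suf: "le_suffixes (wprod J v)"
    and i: "i \<in> Field J" and ne: "Field (fst (v i)) \<noteq> {}"
  shows "lex_le (wprod J v) (wprod (Restr J {j. (i, j) \<in> J}) v)"
proof -
  let ?W = "wprod J v" and ?L = "blocks_before J v i"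
  obtain q where q: "q \<in> Field (fst (v i))" using ne by blast
  have "prod_encode (i, q) \<in> Field (fst ?W) - ?L"
    using i q Field_wprod[OF J v] unfolding blocks_before_def by (simp add: in_blocks)
  then have "lex_le ?W (subword ?W (Field (fst ?W) - ?L))"
    using suf initial_blocks_before[OF J v] unfolding le_suffixes_def by blast
  moreover have "Field J - {j. (j, i) \<in> J \<and> j \<noteq> i} = {j. (i, j) \<in> J}"
    using i wo_refl[OF J] wo_total[OF J] wo_antisym[OF J] by (auto intro: FieldI2)
  then have "Field (fst ?W) - ?L = blocks v {j. (i, j) \<in> J}"
    unfolding Field_wprod[OF J v] blocks_before_def blocks_Diff by simp
  moreover have "{j. (i, j) \<in> J} \<subseteq> Field J" by (auto intro: FieldI2)
  ultimately show ?thesis using subword_blocks_wprod[OF J] by metis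
qed

lemma wword_wprod_tail:
  assumes "Well_order J" "wword (wprod J v)"
  shows "wword (wprod (Restr J {j. (i, j) \<in> J}) v)"
proof -
  have "{j. (i, j) \<in> J} \<subseteq> Field J" by (auto intro: FieldI2)
  then show ?thesis using subword_blocks_wprod[OF assms(1)] wword_subword[OF assms(2)] by metis
qed

lemma lex_le_first_wprod_tail:
  assumes J: "Well_order J" and v: "\<forall>i\<in>Field J. wword (v i)" and W: "wword (wprod J v)"
    and suf: "le_suffixes (wprod J v)" and z: "z \<in> Field J" and least: "\<forall>j\<in>Field J. (z, j) \<in> J"
    and i: "i \<in> Field J" and ne: "Field (fst (v i)) \<noteq> {}"
  shows "lex_le (v z) (wprod (Restr J {j. (i, j) \<in> J}) v)"
proof -
  have vz: "wword (v z)" using v z by blast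
  have "lex_le (v z) (wprod J v)"
    using iprefix_first_wprod[OF J v W z least] lex_le_iff[OF vz W] by blast
  then show ?thesis
    using lex_trans[OF vz W wword_wprod_tail[OF J W]] lex_le_wprod_tail[OF J v suf i ne] by blast
qed

section \<open>Words below a product of words\<close>

lemma word_isom_suffix_block_part:
  assumes J: "Well_order J" and v: "\<forall>i\<in>Field J. wword (v i)" and W: "wword (wprod J v)"
    and p: "wword p" and D0: "initial p D0" and B: "initial (wprod J v) B"
    and f: "word_isom f (subword p D0) (subword (wprod J v) B)"
    and i: "i \<in> Field J" and before: "blocks_before J v i \<subseteq> B"
    and within: "B \<subseteq> blocks_before J v i \<union> blocks v {i}"
  shows "\<exists>A. initial p A \<and> A \<subseteq> D0 \<and> f ` (D0 - A) = B - blocks_before J v i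
    \<and> word_isom (pos \<circ> f) (subword p (D0 - A)) (subword (v i) (pos ` (B - blocks_before J v i)))"
proof -
  let ?W = "wprod J v" and ?L = "blocks_before J v i"
  have BW: "B \<subseteq> Field (fst ?W)" using B initial_subset_Field by blast
  have FD0: "Field (fst (subword p D0)) = D0"
    using Field_subword[OF p] D0 initial_subset_Field by blast
  have FB: "Field (fst (subword ?W B)) = B" using Field_subword[OF W BW] .
  have fD0: "f ` D0 = B" using word_isom_image[OF f] FD0 FB by simp
  have injf: "inj_on f D0" using word_isom_inj[OF f] FD0 by simp
  define A where "A = inv_into D0 f ` ?L"
  have "initial (subword ?W B) ?L"
    using initial_in_subword[OF initial_blocks_before[OF J v] before W BW] .
  then have A_sub: "initial (subword p D0) A"
    unfolding A_def using word_isom_initial word_isom_inv[OF f] FD0 by metis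
  have AD0: "A \<subseteq> D0" using A_sub FD0 initial_subset_Field by blast
  have fA: "f ` A = ?L" unfolding A_def using image_inv_into_cancel[OF fD0 before] .
  have fD0A: "f ` (D0 - A) = B - ?L"
    using inj_on_image_set_diff[OF injf, of D0 A] AD0 fD0 fA by auto
  have "word_isom f (subword (subword p D0) (D0 - A)) (subword (subword ?W B) (f ` (D0 - A)))"
    using word_isom_restrict[OF wword_subword[OF p] f] FD0 by simp
  then have i1: "word_isom f (subword p (D0 - A)) (subword ?W (B - ?L))"
    using fD0A by (simp add: subword_subword Int_absorb1 Diff_subset Int_Diff)
  have BLi: "B - ?L \<subseteq> blocks v {i}" using within by blast
  have "blocks v {i} \<subseteq> Field (fst ?W)" using Field_wprod[OF J v] i blocks_mono by blast
  then have "Field (fst (subword ?W (blocks v {i}))) = blocks v {i}"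
    using Field_subword[OF W] by blast
  then have "word_isom pos (subword (subword ?W (blocks v {i})) (B - ?L))
      (subword (v i) (pos ` (B - ?L)))"
    using word_isom_restrict[OF wword_subword[OF W] word_isom_block[OF J v W i]] BLi by simp
  then have i2: "word_isom pos (subword ?W (B - ?L)) (subword (v i) (pos ` (B - ?L)))"
    using BLi by (simp add: subword_subword Int_absorb1)
  have "initial p A" using initial_subword_trans[OF D0 A_sub] .
  then show ?thesis using AD0 fD0A word_isom_comp[OF i1 i2] by blast
qed

lemma le_suffixes_iprefix_wprod:
  fixes p :: "('a::linorder) word"
  assumes J: "Well_order J" and v: "\<forall>i\<in>Field J. wword (v i)" and W: "wword (wprod J v)"
    and p: "wword p" "le_suffixes p" and small: "\<forall>i\<in>Field J. \<not> lex_le p (v i)"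
    and pre: "iprefix p (wprod J v)"
  shows "\<exists>T \<subseteq> Field J. p \<simeq>w subword (wprod J v) (blocks v T)"
proof -
  obtain B f where B: "initial (wprod J v) B" and f: "word_isom f p (subword (wprod J v) B)"
    using pre unfolding iprefix_def by blast
  then show ?thesis
  proof (cases rule: initial_wprod_cases[OF J v B])
    case (1 T)
    then show ?thesis using f word_iso_iff by blast
  next
    case (2 i)
    \<comment> \<open>\<open>p\<close> ends inside block \<open>i\<close>: its suffix from there on is a prefix of \<open>v i\<close>\<close>
    let ?L = "blocks_before J v i"
    have "word_isom f (subword p (Field (fst p))) (subword (wprod J v) B)"
      using f by (simp add: subword_Field)
    then obtain A where A: "initial p A" "f ` (Field (fst p) - A) = B - ?L"
      and iso: "word_isom (pos \<circ> f) (subword p (Field (fst p) - A))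
        (subword (v i) (pos ` (B - ?L)))"
      using word_isom_suffix_block_part[OF J v W p(1) initial_Field B _ 2(1-3)] by blast
    have "A \<noteq> Field (fst p)" using A(2) 2(4) by auto
    then have le_suffix: "lex_le p (subword p (Field (fst p) - A))"
      using p(2) A(1) unfolding le_suffixes_def by blast
    have "initial (v i) (pos ` (B - ?L))"
      using word_isom_initial[OF word_isom_block[OF J v W 2(1)]
          initial_block_part[OF J v W B 2(1,3)]] .
    then have "iprefix (subword p (Field (fst p) - A)) (v i)"
      using iso unfolding iprefix_def by blast
    then have "lex_le (subword p (Field (fst p) - A)) (v i)"
      using lex_le_iff[OF wword_subword[OF p(1)]] v 2(1) by blast
    then have "lex_le p (v i)"
      using lex_trans[OF p(1) wword_subword[OF p(1)] _ le_suffix] v 2(1) by blast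
    then show ?thesis using small 2(1) by blast
  qed
qed

lemma le_suffixes_not_istr_less_wprod:
  fixes p :: "('a::linorder) word"
  assumes J: "Well_order J" and v: "\<forall>i\<in>Field J. wword (v i)" and W: "wword (wprod J v)"
    and p: "wword p" "le_suffixes p" and small: "\<forall>i\<in>Field J. \<not> lex_le p (v i)"
  shows "\<not> istr_less p (wprod J v)"
proof
  assume "istr_less p (wprod J v)"
  then obtain a D f where a: "a \<in> Field (fst p)" and D: "D \<in> blocks v (Field J)"
    and f: "word_isom f (subword p (below p a)) (subword (wprod J v) (below (wprod J v) D))"
    and lab: "snd p a < snd (wprod J v) D"
    unfolding istr_less_def Field_wprod[OF J v] by blast
  define i where "i = blk D"
  let ?L = "blocks_before J v i" and ?B = "below (wprod J v) D"
  have i: "i \<in> Field J" using D unfolding i_def by (simp add: in_blocks)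
  obtain A where A: "initial p A" "A \<subseteq> below p a"
    and iso: "word_isom (pos \<circ> f) (subword p (below p a - A)) (subword (v i) (pos ` (?B - ?L)))"
    using word_isom_suffix_block_part[OF J v W p(1) initial_below[OF p(1)] initial_below[OF W] f i]
      below_wprod(1,2)[OF J v W D] unfolding i_def by blast
  \<comment> \<open>the suffix \<open>?s\<close> of \<open>p\<close> from block \<open>i\<close> on is strictly below \<open>v i\<close> at \<open>a\<close>\<close>
  let ?s = "subword p (Field (fst p) - A)"
  have aA: "a \<notin> A" using A(2) by (auto simp: below_def)
  then have as: "a \<in> Field (fst ?s)" using Field_subword[OF p(1)] a by blast
  have "below ?s a = below p a - A"
    using aA a below_subset_Field[of p a] by (auto simp: below_subword)
  then have "subword ?s (below ?s a) = subword p (below p a - A)"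
    using below_subset_Field[of p a] by (simp add: subword_subword Int_absorb1 Diff_mono)
  moreover have "pos D \<in> Field (fst (v i))" "snd ?s a < snd (v i) (pos D)"
    using D lab unfolding i_def by (auto simp: in_blocks snd_wprod)
  ultimately have "istr_less ?s (v i)"
    unfolding istr_less_def using as iso below_wprod(3)[OF J v W D] unfolding i_def by metis
  then have "lex_le ?s (v i)" using lex_le_iff wword_subword[OF p(1)] v i by blast
  moreover have "lex_le p ?s" using p(2) A(1) aA a unfolding le_suffixes_def by blast
  ultimately show False using lex_trans[OF p(1) wword_subword[OF p(1)]] small v i by blast
qed

lemma le_suffixes_le_wprod:
  fixes p :: "('a::linorder) word"
  assumes J: "Well_order J" and v: "\<forall>i\<in>Field J. wword (v i)" and W: "wword (wprod J v)"
    and p: "wword p" "le_suffixes p" and small: "\<forall>i\<in>Field J. \<not> lex_le p (v i)"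
    and le: "lex_le p (wprod J v)"
  shows "\<exists>T \<subseteq> Field J. p \<simeq>w wprod (Restr J T) v"
proof -
  have "iprefix p (wprod J v)"
    using le lex_le_iff[OF p(1) W] le_suffixes_not_istr_less_wprod[OF assms(1-6)] by blast
  then obtain T where "T \<subseteq> Field J" "p \<simeq>w subword (wprod J v) (blocks v T)"
    using le_suffixes_iprefix_wprod[OF assms(1-6)] by blast
  then show ?thesis using subword_blocks_wprod[OF J] by metis
qed

section \<open>Non-increasing products of prime words\<close>

lemma prime_wprod_factor_iprefix_first:
  fixes u :: "nat \<Rightarrow> ('a::linorder) word"
  assumes I: "Well_order I" and u: "\<forall>i\<in>Field I. prime_word (u i)"
    and noninc: "\<forall>i\<in>Field I. \<forall>j\<in>Field I. (i, j) \<in> I \<and> i \<noteq> j \<longrightarrow> lex_le (u j) (u i)"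
    and w: "prime_word (wprod I u)"
    and z: "z \<in> Field I" and least: "\<forall>j\<in>Field I. (z, j) \<in> I" and i: "i \<in> Field I"
  shows "iprefix (u i) (u z)"
proof -
  let ?S = "{j. (i, j) \<in> I}"
  let ?s = "wprod (Restr I ?S) u"
  have uw: "\<forall>i\<in>Field I. wword (u i)" using u prime_wword by blast
  have W: "wword (wprod I u)" using prime_wword[OF w] .
  have s: "wword ?s" using wword_wprod_tail[OF I W] .
  have ne: "Field (fst (u i)) \<noteq> {}" using u i primitive_ne unfolding prime_word_def by blast
  have zs: "lex_le (u z) ?s"
    using lex_le_first_wprod_tail[OF I uw W le_suffixes_prime[OF w] z least i ne] .
  have "?S \<subseteq> Field I" by (auto intro: FieldI2)
  then have FS: "Field (Restr I ?S) = ?S" using Field_Restr_Well_order[OF I] by blast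
  have "iprefix (u i) ?s"
    using iprefix_first_wprod[OF Well_order_Restr[OF I] _ s] FS uw wo_refl[OF I i]
    by (auto intro: FieldI2)
  moreover have "lex_le (u i) (u z)"
  proof (cases "i = z")
    case True
    then show ?thesis using lex_refl uw z by blast
  next
    case False
    then show ?thesis using noninc z i least by blast
  qed
  moreover have "\<not> istr_less ?s (u z)" using lex_le_not_istr_less[OF _ s zs] uw z by blast
  ultimately show ?thesis
    using lex_le_iff[of "u i" "u z"] iprefix_istr_less_extend[of "u i" ?s "u z"] uw i z s by blast
qed

lemma prime_wprod_tail_iso_first:
  fixes u :: "nat \<Rightarrow> ('a::linorder) word"
  assumes I: "Well_order I" and u: "\<forall>i\<in>Field I. prime_word (u i)"
    and w: "prime_word (wprod I u)"
    and z: "z \<in> Field I" and least: "\<forall>j\<in>Field I. (z, j) \<in> I"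
    and pre: "\<forall>i\<in>Field I. iprefix (u i) (u z)"
    and i0: "i0 \<in> Field I" and tail: "\<forall>j\<in>Field I. (i0, j) \<in> I \<longrightarrow> u j \<simeq>w u i0"
  shows "u i0 \<simeq>w u z"
proof (rule ccontr)
  assume ne: "\<not> u i0 \<simeq>w u z"
  let ?S = "{j. (i0, j) \<in> I}"
  have uw: "\<forall>i\<in>Field I. wword (u i)" using u prime_wword by blast
  have "prime_word (u z)" using u z by blast
  then have uz: "wword (u z)" "le_suffixes (u z)" "primitive (u z)"
    using prime_wword le_suffixes_prime prime_word_def by blast+
  have ui0: "wword (u i0)" and W: "wword (wprod I u)" using uw i0 prime_wword[OF w] by blast+
  have S: "?S \<subseteq> Field I" by (auto intro: FieldI2)
  have FS: "Field (Restr I ?S) = ?S" using Field_Restr_Well_order[OF I S] .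
  have "lex_le (u i0) (u z)" using pre i0 lex_le_iff[OF ui0 uz(1)] by blast
  then have small: "\<forall>j\<in>Field (Restr I ?S). \<not> lex_le (u z) (u j)"
    using not_lex_le_of_iso[OF uz(1) ui0] ne tail uw FS S by blast
  have "Field (fst (u i0)) \<noteq> {}" using u i0 primitive_ne unfolding prime_word_def by blast
  then have "lex_le (u z) (wprod (Restr I ?S) u)"
    using lex_le_first_wprod_tail[OF I uw W le_suffixes_prime[OF w] z least i0] by blast
  moreover have "\<forall>j\<in>Field (Restr I ?S). wword (u j)" using FS uw S by blast
  ultimately obtain T where T: "T \<subseteq> Field (Restr I ?S)"
    and iso: "u z \<simeq>w wprod (Restr (Restr I ?S) T) u"
    using le_suffixes_le_wprod[OF Well_order_Restr[OF I] _ wword_wprod_tail[OF I W] uz(1,2) small]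
    by blast
  have "Restr (Restr I ?S) T = Restr I T" using T FS by blast
  then have iso': "u z \<simeq>w wprod (Restr I T) u" using iso by simp
  have "\<forall>j\<in>Field (Restr I T). wword (u j) \<and> u j \<simeq>w u i0"
  proof
    fix j assume "j \<in> Field (Restr I T)"
    then have "j \<in> ?S" using T FS unfolding Field_def by blast
    then show "wword (u j) \<and> u j \<simeq>w u i0" using tail uw S by blast
  qed
  then have "u i0 \<simeq>w u z"
    using primitive_iso_wprod_const[OF uz(3) Well_order_Restr[OF I] ui0 _ iso'] by blast
  then show False using ne by blast
qed

theorem mainTheorem17:
  fixes I :: "nat rel" and u :: "nat \<Rightarrow> ('a::{finite,linorder}) word"
  assumes "Well_order I"
    and "\<forall>i\<in>Field I. prime_word (u i)"
    and "\<forall>i\<in>Field I. \<forall>j\<in>Field I. (i, j) \<in> I \<and> i \<noteq> j \<longrightarrow> lex_le (u j) (u i)"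
    and "\<exists>i\<in>Field I. \<exists>j\<in>Field I. i \<noteq> j"
  shows "\<not> prime_word (wprod I u)"
proof
  assume w: "prime_word (wprod I u)"
  have uw: "\<forall>i\<in>Field I. wword (u i)" using assms(2) prime_wword by blast
  have noninc: "\<forall>i\<in>Field I. \<forall>j\<in>Field I. (i, j) \<in> I \<longrightarrow> lex_le (u j) (u i)"
    using assms(3) lex_refl uw by blast
  obtain z where z: "z \<in> Field I" and least: "\<forall>j\<in>Field I. (z, j) \<in> I"
    using wo_rel.Well_order_isMinim_exists[of I "Field I"] assms(1,4) wo_rel_def
    by (auto simp: wo_rel.isMinim_def)
  have pre: "\<forall>i\<in>Field I. iprefix (u i) (u z)"
    using prime_wprod_factor_iprefix_first[OF assms(1-3) w z least] by blast
  obtain i0 where i0: "i0 \<in> Field I" and tail: "\<forall>j\<in>Field I. (i0, j) \<in> I \<longrightarrow> u j \<simeq>w u i0"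
    using iprefix_chain_eventually_constant[OF assms(1) z uw[rule_format, OF z]] pre uw noninc
    by blast
  have "u i0 \<simeq>w u z" using prime_wprod_tail_iso_first[OF assms(1,2) w z least pre i0 tail] .
  then have "\<forall>j\<in>Field I. wword (u j) \<and> u j \<simeq>w u z"
    using noninc_all_iso_first[OF assms(1) uw noninc z least i0 tail] uw by blast
  moreover have "primitive (wprod I u)" using w prime_word_def by blast
  ultimately have "card (Field I) = 1"
    using primitive_iso_wprod_const[OF _ assms(1) uw[rule_format, OF z] _ word_iso_refl] by blast
  then show False using assms(4) by (auto simp: card_1_singleton_iff)
qed

end
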